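(* Let $P\subseteq\mathbb{R}^n$ be an $n$-dimensional lattice polytope whose normal fan is $\mathbb{Q}$-Gorenstein of index $r$. If $s\ge r\,\tau(P)$ is an integer, then $(sP)^{(r)}$ is a lattice polytope. In particular, $\mathrm{cd}(P)-1<r\,\tau(P)$.
   Context: Write an $n$-dimensional rational polytope $Q$ irredundantly as $Q=\{x:\langle a_i,x\rangle\ge b_i\}$ with primitive $a_i\in(\mathbb{Z}^n)^*$, each inequality defining a facet; $d_Q(x):=\min_i(\langle a_i,x\rangle-b_i)$, $Q^{(s)}:=\{x:d_Q(x)\ge s\}$. $\mathcal{N}(P)$ is the inner normal fan. A rational cone $\sigma\subseteq(\mathbb{R}^n)^*$ with primitive ray generators $w_1,\dots,w_k$ is $\mathbb{Q}$-Gorenstein of index $r_\sigma$ if there is a primitive $u_\sigma\in\mathbb{Z}^n$ with $\langle w_j,u_\sigma\rangle=r_\sigma$ for all $j$. $\mathcal{N}(P)$ is $\mathbb{Q}$-Gorenstein of index $r$ if all maximal cones are $\mathbb{Q}$-Gorenstein and $r=\mathrm{lcm}(r_\sigma:\sigma$ maximal cone$)$. The nef value is $\tau(P):=(\sup\{s>0:\mathcal{N}(P^{(s)})=\mathcal{N}(P)\})^{-1}$. The codegree is $\mathrm{cd}(P):=\min\{k\in\mathbb{Z}_{\ge1}:\mathrm{int}(kP)\cap\mathbb{Z}^n\neq\emptyset\}$. *)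

theory Defs
  imports "HOL-Analysis.Analysis"
begin

definition int_vec :: "real^'n \<Rightarrow> bool" where
  "int_vec x \<longleftrightarrow> (\<forall>i. x $ i \<in> \<int>)"

definition primitive_vec :: "real^'n \<Rightarrow> bool" where
  "primitive_vec a \<longleftrightarrow> int_vec a \<and> a \<noteq> 0 \<and>
     (\<forall>k::int. k > 1 \<longrightarrow> \<not> int_vec ((1 / real_of_int k) *\<^sub>R a))"

definition lattice_polytope :: "(real^'n) set \<Rightarrow> bool" where
  "lattice_polytope P \<longleftrightarrow>
     (\<exists>V. finite V \<and> V \<noteq> {} \<and> (\<forall>v\<in>V. int_vec v) \<and> P = convex hull V)"

definition facet_ineqs :: "(real^'n) set \<Rightarrow> ((real^'n) \<times> real) set" where
  "facet_ineqs Q = {(a, b). primitive_vec a \<and> (\<forall>x\<in>Q. a \<bullet> x \<ge> b)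
                     \<and> {x \<in> Q. a \<bullet> x = b} facet_of Q}"

definition lattice_dist :: "(real^'n) set \<Rightarrow> real^'n \<Rightarrow> real" where
  "lattice_dist Q x = Min ((\<lambda>(a, b). a \<bullet> x - b) ` facet_ineqs Q)"

definition inner_par :: "(real^'n) set \<Rightarrow> real \<Rightarrow> (real^'n) set" where
  "inner_par Q s = {x. lattice_dist Q x \<ge> s}"

definition normal_cone :: "(real^'n) set \<Rightarrow> (real^'n) set \<Rightarrow> (real^'n) set" where
  "normal_cone P F = {u. \<forall>x\<in>P. \<forall>y\<in>F. u \<bullet> y \<le> u \<bullet> x}"

definition normal_fan :: "(real^'n) set \<Rightarrow> (real^'n) set set" where
  "normal_fan P = {normal_cone P F | F. F face_of P \<and> F \<noteq> {}}"

definition max_cones :: "(real^'n) set set \<Rightarrow> (real^'n) set set" where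
  "max_cones \<Sigma> = {\<sigma> \<in> \<Sigma>. \<forall>\<tau>\<in>\<Sigma>. \<sigma> \<subseteq> \<tau> \<longrightarrow> \<tau> = \<sigma>}"

definition ray_gens :: "(real^'n) set \<Rightarrow> (real^'n) set" where
  "ray_gens \<sigma> = {w. primitive_vec w \<and> {c *\<^sub>R w | c. c \<ge> 0} face_of \<sigma>}"

definition QGor_cone :: "(real^'n) set \<Rightarrow> nat \<Rightarrow> bool" where
  "QGor_cone \<sigma> r \<longleftrightarrow> r > 0 \<and>
     (\<exists>u. primitive_vec u \<and> (\<forall>w\<in>ray_gens \<sigma>. w \<bullet> u = real r))"

definition gor_index :: "(real^'n) set \<Rightarrow> nat" where
  "gor_index \<sigma> = (THE r. QGor_cone \<sigma> r)"

definition QGor_fan :: "(real^'n) set set \<Rightarrow> nat \<Rightarrow> bool" where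
  "QGor_fan \<Sigma> r \<longleftrightarrow> (\<forall>\<sigma>\<in>max_cones \<Sigma>. \<exists>r\<sigma>. QGor_cone \<sigma> r\<sigma>)
     \<and> r = Lcm (gor_index ` max_cones \<Sigma>)"

definition nef_value :: "(real^'n) set \<Rightarrow> real" where
  "nef_value P = inverse (Sup {s. s > 0 \<and> normal_fan (inner_par P s) = normal_fan P})"

definition codegree :: "(real^'n) set \<Rightarrow> nat" where
  "codegree P = (LEAST k. k \<ge> 1 \<and>
     (\<exists>x. int_vec x \<and> x \<in> interior ((\<lambda>y. real k *\<^sub>R y) ` P)))"

end

theory Submission
  imports Defs
begin

text \<open>
  For a vertex \<open>v\<close> of \<open>P\<close>, the \<open>\<rat>\<close>-Gorenstein condition on its vertex cone \<open>\<sigma>\<close> gives a vector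
  \<open>w v = u\<^sub>\<sigma> / r\<^sub>\<sigma>\<close> with \<open>\<langle>a, w v\<rangle> = 1\<close> for every facet normal \<open>a\<close> through \<open>v\<close>, and \<open>r w v\<close>
  is integral because \<open>r\<^sub>\<sigma>\<close> divides \<open>r\<close>. As long as \<open>P^(t)\<close> has the normal fan of \<open>P\<close>, that is
  for \<open>0 < t \<le> 1 / \<tau>(P)\<close>, the vertex cone of \<open>v\<close> is the normal cone of a vertex of \<open>P^(t)\<close>;
  the facet normals through \<open>v\<close> span extreme rays of that cone, so they stay active at this
  vertex, which is therefore \<open>v + t w v\<close>. Hence for an integer \<open>s \<ge> r \<tau>(P)\<close> the vertices of
  \<open>(sP)^(r) = s P^(r/s)\<close> are the lattice points \<open>s v + r w v\<close>. For \<open>s = \<lceil>r \<tau>(P)\<rceil>\<close> such a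
  point satisfies every facet inequality of \<open>sP\<close> strictly, so \<open>cd(P) \<le> s < r \<tau>(P) + 1\<close>.
\<close>

section \<open>Integer and primitive vectors\<close>

lemma int_vec_iff: "int_vec x \<longleftrightarrow> (\<forall>i. \<exists>n::int. x $ i = of_int n)"
  unfolding int_vec_def Ints_def by auto

lemma int_vec_diff: "int_vec x \<Longrightarrow> int_vec y \<Longrightarrow> int_vec (x - y)"
  unfolding int_vec_def by (simp add: Ints_diff)

lemma int_vec_add: "int_vec x \<Longrightarrow> int_vec y \<Longrightarrow> int_vec (x + y)"
  unfolding int_vec_def by (simp add: Ints_add)

lemma int_vec_scaleR_of_int: "int_vec x \<Longrightarrow> int_vec (real_of_int k *\<^sub>R x)"
  unfolding int_vec_def by (simp add: Ints_mult)

lemma int_vec_scaleR_of_nat: "int_vec x \<Longrightarrow> int_vec (real k *\<^sub>R x)"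
  unfolding int_vec_def by (simp add: Ints_mult)

lemma int_vec_scaleR_coprime_denominator:
  fixes a :: "real^'n"
  assumes a: "int_vec a" and pa: "int_vec ((of_int p / of_int q) *\<^sub>R a)"
    and cop: "coprime p q" and q: "q > 0"
  shows "int_vec ((1 / of_int q) *\<^sub>R a)"
  unfolding int_vec_iff
proof
  fix i
  obtain A where A: "a $ i = of_int A" using a unfolding int_vec_iff by metis
  obtain B where B: "((of_int p / of_int q) *\<^sub>R a) $ i = of_int B" using pa unfolding int_vec_iff by metis
  have "real_of_int q * real_of_int B = real_of_int p * real_of_int A" using A B q by (simp add: field_simps)
  then have "q * B = p * A" by (metis of_int_eq_iff of_int_mult)
  then have "q dvd p * A" by (metis dvd_triv_left)
  then obtain m where "A = q * m" using cop by (meson coprime_commute coprime_dvd_mult_right_iff dvdE)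
  then have "((1 / of_int q) *\<^sub>R a) $ i = of_int m" using A q by simp
  then show "\<exists>n::int. ((1 / of_int q) *\<^sub>R a) $ i = of_int n" by blast
qed

lemma primitive_vec_pos_multiple_eq_1:
  fixes a :: "real^'n"
  assumes pa: "primitive_vec a" and pc: "primitive_vec (c *\<^sub>R a)" and c: "c > 0"
  shows "c = 1"
proof -
  have ia: "int_vec a" and a0: "a \<noteq> 0" and ic: "int_vec (c *\<^sub>R a)"
    using pa pc unfolding primitive_vec_def by auto
  obtain j where aj: "a $ j \<noteq> 0" using a0 by (metis vec_eq_iff zero_index)
  obtain A B :: int where "a $ j = of_int A" "(c *\<^sub>R a) $ j = of_int B"
    using ia ic unfolding int_vec_iff by metis
  then have "c = of_int B / of_int A" using aj by (simp add: field_simps)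
  then have "c \<in> \<rat>" by simp
  then obtain p q :: int where cpq: "c = of_int p / of_int q" and q0: "q > 0" and cop: "coprime p q"
    by (rule Rats_cases')
  have "int_vec ((1 / of_int q) *\<^sub>R a)"
    using ia ic cop q0 unfolding cpq by (rule int_vec_scaleR_coprime_denominator)
  then have "q = 1" using pa q0 unfolding primitive_vec_def by force
  then have cp: "c = of_int p" and p0: "p > 0" using cpq c by auto
  have "(1 / real_of_int p) *\<^sub>R (c *\<^sub>R a) = a" using cp p0 by simp
  then have "\<not> p > 1" using pc ia unfolding primitive_vec_def by metis
  then show ?thesis using cp p0 by simp
qed

lemma primitive_vec_divisor_exists:
  fixes c :: "real^'n"
  assumes ci: "int_vec c" and c0: "c \<noteq> 0"
  obtains m :: int where "m \<ge> 1" "primitive_vec ((1 / real_of_int m) *\<^sub>R c)"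
proof -
  obtain j where cj: "c $ j \<noteq> 0" using c0 by (metis vec_eq_iff zero_index)
  define M where "M = {m::int. m \<ge> 1 \<and> int_vec ((1 / real_of_int m) *\<^sub>R c)}"
  have bnd: "m \<le> \<lfloor>\<bar>c $ j\<bar>\<rfloor>" if "m \<in> M" for m
  proof -
    have m1: "m \<ge> 1" and iv: "int_vec ((1 / real_of_int m) *\<^sub>R c)" using that unfolding M_def by auto
    obtain n :: int where "((1 / real_of_int m) *\<^sub>R c) $ j = of_int n"
      using iv unfolding int_vec_iff by blast
    then have n: "c $ j / real_of_int m = of_int n" by simp
    have "n \<noteq> 0" using n cj m1 by auto
    then have "\<bar>real_of_int n\<bar> \<ge> 1" by linarith
    then have "\<bar>c $ j\<bar> / real_of_int m \<ge> 1" using n m1 by (simp add: abs_div_pos)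
    then have "real_of_int m \<le> \<bar>c $ j\<bar>" using m1 by (simp add: le_divide_eq)
    then show ?thesis by linarith
  qed
  have "M \<subseteq> {1..\<lfloor>\<bar>c $ j\<bar>\<rfloor>}" using bnd unfolding M_def by auto
  then have finM: "finite M" by (rule finite_subset) simp
  have "1 \<in> M" unfolding M_def using ci by simp
  define m0 where "m0 = Max M"
  have m0M: "m0 \<in> M" unfolding m0_def using finM \<open>1 \<in> M\<close> by (intro Max_in) auto
  have m0_max: "m \<le> m0" if "m \<in> M" for m unfolding m0_def using finM that by simp
  have m01: "m0 \<ge> 1" using m0M unfolding M_def by simp
  have "primitive_vec ((1 / real_of_int m0) *\<^sub>R c)"
    unfolding primitive_vec_def
  proof (intro conjI allI impI)
    show "int_vec ((1 / real_of_int m0) *\<^sub>R c)" using m0M unfolding M_def by simp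
    show "(1 / real_of_int m0) *\<^sub>R c \<noteq> 0" using c0 m01 by simp
    fix k :: int assume k: "k > 1"
    show "\<not> int_vec ((1 / real_of_int k) *\<^sub>R (1 / real_of_int m0) *\<^sub>R c)"
    proof
      assume "int_vec ((1 / real_of_int k) *\<^sub>R (1 / real_of_int m0) *\<^sub>R c)"
      moreover have "1 * 1 \<le> k * m0" using k m01 by (intro mult_mono) auto
      ultimately have "k * m0 \<in> M" unfolding M_def by simp
      then have "k * m0 \<le> m0" by (rule m0_max)
      moreover have "2 * m0 \<le> k * m0" using k m01 by (intro mult_right_mono) auto
      ultimately show False using m01 by linarith
    qed
  qed
  then show ?thesis using m01 that by blast
qed

definition replace_row :: "'n \<Rightarrow> ('n \<Rightarrow> real^'n) \<Rightarrow> real^'n \<Rightarrow> real^'n^'n" where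
  "replace_row k f x = (\<chi> i. if i = k then x else f i)"

lemma det_replace_row_expansion:
  fixes x :: "real^'n"
  shows "det (replace_row k f x) = (\<Sum>j\<in>UNIV. x $ j * det (replace_row k f (axis j 1)))"
proof -
  have "det (replace_row k f x)
      = det (\<chi> i. if i = k then sum (\<lambda>j. x $ j *s axis j 1) UNIV else f i)"
    unfolding replace_row_def by (simp only: basis_expansion)
  also have "\<dots> = (\<Sum>j\<in>UNIV. det (\<chi> i. if i = k then x $ j *s axis j (1::real) else f i))"
    by (rule det_linear_row_sum) simp
  also have "\<dots> = (\<Sum>j\<in>UNIV. x $ j * det (replace_row k f (axis j 1)))"
    unfolding replace_row_def by (rule sum.cong[OF refl]) (rule det_row_mul)
  finally show ?thesis .
qed

lemma det_Ints:
  fixes A :: "real^'n^'n"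
  assumes "\<And>i j. A $ i $ j \<in> \<int>"
  shows "det A \<in> \<int>"
  unfolding det_def using assms by (intro Ints_sum Ints_mult Ints_prod) auto

text \<open>The cofactors along row \<open>k\<close> of an integer matrix form an integer vector orthogonal
  to all other rows, whose inner product with row \<open>k\<close> is the determinant.\<close>
lemma int_vec_cofactor_exists:
  fixes f :: "'n \<Rightarrow> real^'n"
  assumes f_int: "\<And>i. int_vec (f i)" and det: "det (\<chi> i. f i) \<noteq> 0"
  obtains c where "int_vec c" "c \<noteq> 0" "\<And>i. i \<noteq> k \<Longrightarrow> c \<bullet> f i = 0"
proof -
  define c :: "real^'n" where "c = (\<chi> j. det (replace_row k f (axis j 1)))"
  have c_inner: "c \<bullet> x = det (replace_row k f x)" for x
    unfolding c_def inner_vec_def using det_replace_row_expansion[of k f x] by (simp add: mult.commute)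
  have "int_vec c"
    unfolding int_vec_def c_def
  proof
    fix j
    show "(\<chi> j. det (replace_row k f (axis j 1))) $ j \<in> \<int>"
      using f_int by (simp, intro det_Ints) (auto simp: replace_row_def axis_def int_vec_def)
  qed
  moreover have "c \<bullet> f k \<noteq> 0"
  proof -
    have "replace_row k f (f k) = (\<chi> i. f i)" unfolding replace_row_def by (simp add: vec_eq_iff)
    then show ?thesis using c_inner det by simp
  qed
  moreover have "c \<bullet> f i = 0" if "i \<noteq> k" for i
  proof -
    have "det (replace_row k f (f i)) = 0"
      by (rule det_identical_rows[OF \<open>i \<noteq> k\<close>]) (simp add: replace_row_def row_def vec_eq_iff \<open>i \<noteq> k\<close>)
    then show ?thesis using c_inner by simp
  qed
  ultimately show ?thesis using that by force
qed

lemma independent_extend_by_Basis: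
  fixes B :: "(real^'n) set"
  assumes "independent B" "finite B"
  obtains B' where "B \<subseteq> B'" "B' \<subseteq> B \<union> Basis" "independent B'" "finite B'" "card B' = CARD('n)"
proof -
  obtain B' where B': "B \<subseteq> B'" "B' \<subseteq> B \<union> Basis" "independent B'" "B \<union> Basis \<subseteq> span B'"
    using maximal_independent_subset_extend[of B "B \<union> Basis"] assms(1) by blast
  have "finite B'" using B'(2) assms(2) by (metis finite_Basis finite_UnI finite_subset)
  moreover have "span B' = UNIV"
    using B'(4) span_Basis by (metis le_sup_iff span_mono span_span top.extremum_uniqueI)
  then have "card B' = CARD('n)" using dim_eq_card_independent[OF B'(3)] dim_eq_full[of B'] by simp
  ultimately show ?thesis using B' that by blast
qed

text \<open>Complete a basis of \<open>span D\<close> by standard basis vectors and take the cofactor vector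
  along a row not in \<open>span D\<close>.\<close>
lemma int_vec_orthogonal_exists:
  fixes D :: "(real^'n) set"
  assumes finD: "finite D" and intD: "\<forall>d\<in>D. int_vec d" and dimD: "dim D < CARD('n)"
  obtains c where "int_vec c" "c \<noteq> 0" "\<forall>d\<in>D. c \<bullet> d = 0"
proof -
  obtain B where B: "B \<subseteq> D" "independent B" "D \<subseteq> span B" "card B = dim D"
    by (rule basis_exists)
  have "finite B" using B(1) finD finite_subset by blast
  then obtain B' where B': "B \<subseteq> B'" "B' \<subseteq> B \<union> Basis" "independent B'"
    and finB': "finite B'" and cardB': "card B' = CARD('n)"
    using independent_extend_by_Basis[OF B(2)] by blast
  have "B \<noteq> B'" using B(4) dimD cardB' by auto
  then obtain e where e: "e \<in> B'" "e \<notin> B" using B'(1) by blast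
  obtain f where f: "bij_betw f (UNIV::'n set) B'"
    using finite_same_card_bij[of "UNIV::'n set" B'] finB' cardB' by auto
  obtain k where k: "f k = e" using f e(1) by (metis bij_betw_imp_surj_on imageE)
  have f_int: "int_vec (f i)" for i
  proof -
    have "f i \<in> B \<union> Basis" using B'(2) f bij_betwE by blast
    then show ?thesis
    proof
      assume "f i \<in> B" then show ?thesis using B(1) intD by blast
    next
      assume "f i \<in> Basis"
      then obtain m where "f i = axis m 1" unfolding Basis_vec_def by auto
      then show ?thesis unfolding int_vec_def by (simp add: axis_def)
    qed
  qed
  have "det (\<chi> i. f i) \<noteq> 0"
  proof
    assume "det (\<chi> i. f i) = 0"
    then have "rank (\<chi> i. f i) < CARD('n)" by (simp add: det_eq_0_rank)
    moreover have "rows (\<chi> i. f i) = B'" using f unfolding rows_def row_def by (auto simp: bij_betw_def)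
    ultimately have "dim B' < CARD('n)" by (simp add: row_rank_def)
    then show False using dim_eq_card_independent[OF B'(3)] cardB' by simp
  qed
  then obtain c where c: "int_vec c" "c \<noteq> 0" "\<And>i. i \<noteq> k \<Longrightarrow> c \<bullet> f i = 0"
    using int_vec_cofactor_exists[of f k] f_int by blast
  have cB: "c \<bullet> b = 0" if b: "b \<in> B" for b
  proof -
    obtain i where i: "f i = b" using b B'(1) f by (metis bij_betw_imp_surj_on imageE subsetD)
    moreover have "i \<noteq> k" using i k e b by auto
    ultimately show ?thesis using c(3) by blast
  qed
  have "c \<bullet> d = 0" if "d \<in> D" for d
  proof -
    have "d \<in> span B" using that B(3) by blast
    then have "orthogonal c d" by (rule orthogonal_to_span) (use cB in \<open>auto simp: orthogonal_def\<close>)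
    then show ?thesis by (simp add: orthogonal_def)
  qed
  then show ?thesis using that c(1,2) by blast
qed

lemma orthogonal_hyperplane_parallel:
  fixes a u :: "real^'n" and D :: "(real^'n) set"
  assumes a0: "a \<noteq> 0" and aD: "\<forall>d\<in>D. a \<bullet> d = 0" and uD: "\<forall>d\<in>D. u \<bullet> d = 0"
    and dD: "dim D = CARD('n) - 1"
  obtains c where "u = c *\<^sub>R a"
proof -
  have "a \<notin> span D"
  proof
    assume "a \<in> span D"
    then have "orthogonal a a" by (rule orthogonal_to_span) (use aD in \<open>auto simp: orthogonal_def\<close>)
    then show False using a0 by (simp add: orthogonal_def)
  qed
  then have "dim (insert a D) = CARD('n)" using dD by (simp add: dim_insert)
  then have "u \<in> span (insert a D)" using dim_eq_full[of "insert a D"] by simp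
  then obtain k where k: "u - k *\<^sub>R a \<in> span D" by (auto simp: span_insert)
  define d where "d = u - k *\<^sub>R a"
  have "orthogonal u d" using k unfolding d_def
    by (rule orthogonal_to_span) (use uD in \<open>auto simp: orthogonal_def\<close>)
  moreover have "orthogonal a d" using k unfolding d_def
    by (rule orthogonal_to_span) (use aD in \<open>auto simp: orthogonal_def\<close>)
  ultimately have "d \<bullet> d = 0" unfolding d_def orthogonal_def by (simp add: inner_diff_left inner_commute)
  then show ?thesis using that[of k] unfolding d_def by simp
qed

section \<open>Convex geometry\<close>

lemma finite_ex_pos_mult_less:
  fixes g h :: "'a \<Rightarrow> real"
  assumes "finite I" "\<And>i. i \<in> I \<Longrightarrow> g i > 0"
  obtains e where "e > 0" "\<And>i. i \<in> I \<Longrightarrow> e * h i < g i"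
proof -
  define e where "e = Min (insert 1 ((\<lambda>i. g i / (\<bar>h i\<bar> + 1)) ` I))"
  have fin: "finite (insert 1 ((\<lambda>i. g i / (\<bar>h i\<bar> + 1)) ` I))" using assms(1) by simp
  have e0: "e > 0" unfolding e_def using assms fin
    by (subst Min_gr_iff) (auto intro!: divide_pos_pos simp: add_pos_nonneg)
  have "e * h i < g i" if "i \<in> I" for i
  proof -
    have "e \<le> g i / (\<bar>h i\<bar> + 1)" unfolding e_def using fin that by (intro Min_le) auto
    then have "e * (\<bar>h i\<bar> + 1) \<le> g i" by (simp add: le_divide_eq add_pos_nonneg)
    moreover have "e * h i \<le> e * \<bar>h i\<bar>" using e0 by (simp add: mult_left_mono)
    moreover have "e * (\<bar>h i\<bar> + 1) = e * \<bar>h i\<bar> + e" by (simp add: distrib_left)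
    ultimately show ?thesis using e0 by linarith
  qed
  then show ?thesis using that e0 by blast
qed

lemma convex_cone_hull_finite_nonneg_combination:
  fixes C :: "'a::real_vector set"
  assumes "finite C" "u \<in> convex_cone hull C"
  obtains l where "\<forall>c\<in>C. l c \<ge> 0" "u = (\<Sum>c\<in>C. l c *\<^sub>R c)"
proof (cases "u = 0")
  case True
  then show ?thesis using that[of "\<lambda>_. 0"] by simp
next
  case False
  then obtain x c where "x \<in> convex hull C" "c \<ge> 0" "u = c *\<^sub>R x"
    using assms(2) by (auto simp: convex_cone_hull_convex_hull)
  moreover from \<open>x \<in> convex hull C\<close> obtain m where "\<forall>y\<in>C. 0 \<le> m y" "x = (\<Sum>y\<in>C. m y *\<^sub>R y)"
    using assms(1) by (auto simp: convex_hull_finite)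
  ultimately show ?thesis
    using that[of "\<lambda>y. c * m y"] by (simp add: scaleR_sum_right)
qed

lemma nonneg_combination_inner_le:
  assumes "finite C" "\<forall>c\<in>C. l c \<ge> 0" "u = (\<Sum>c\<in>C. l c *\<^sub>R c)" "\<forall>c\<in>C. c \<bullet> y \<le> c \<bullet> x"
  shows "u \<bullet> y \<le> u \<bullet> x"
proof -
  have "u \<bullet> y = (\<Sum>c\<in>C. l c * (c \<bullet> y))" using assms(3) by (simp add: inner_sum_left)
  also have "\<dots> \<le> (\<Sum>c\<in>C. l c * (c \<bullet> x))" using assms(2,4) by (intro sum_mono mult_left_mono) auto
  also have "\<dots> = u \<bullet> x" using assms(3) by (simp add: inner_sum_left)
  finally show ?thesis .
qed

lemma finite_cone_separation:
  fixes K :: "(real^'n) set"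
  assumes finK: "finite K" and u: "u \<notin> convex_cone hull K"
  obtains z where "u \<bullet> z < 0" "\<And>c. c \<in> K \<Longrightarrow> c \<bullet> z \<ge> 0"
proof -
  have closed_cone: "closed (convex_cone hull K)"
  proof (cases "K = {}")
    case False
    then have "convex_cone hull K = conic hull (convex hull K)"
      by (rule convex_cone_hull_separate_nonempty)
    moreover have "polytope (convex hull K)" using finK unfolding polytope_def by blast
    ultimately show ?thesis using closed_conic_hull_strong by metis
  qed simp
  obtain z \<beta> where z: "z \<bullet> u < \<beta>" "\<forall>k\<in>convex_cone hull K. z \<bullet> k > \<beta>"
    using separating_hyperplane_closed_point[OF convex_convex_cone_hull closed_cone u] by blast
  have \<beta>0: "\<beta> < 0" using z(2) convex_cone_hull_contains_0 by fastforce
  have "c \<bullet> z \<ge> 0" if "c \<in> K" for c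
  proof (rule ccontr)
    assume "\<not> c \<bullet> z \<ge> 0"
    then have zc0: "z \<bullet> c < 0" by (simp add: inner_commute)
    have "(\<beta> / (z \<bullet> c)) *\<^sub>R c \<in> convex_cone hull K"
      using \<beta>0 zc0 \<open>c \<in> K\<close> by (intro convex_cone_hull_mul hull_inc) (auto simp: divide_nonpos_neg)
    then have "z \<bullet> ((\<beta> / (z \<bullet> c)) *\<^sub>R c) > \<beta>" using z(2) by blast
    then show False using zc0 by simp
  qed
  moreover have "u \<bullet> z < 0" using z(1) \<beta>0 by (simp add: inner_commute)
  ultimately show ?thesis using that by blast
qed

text \<open>Farkas' lemma at a minimizer: otherwise a small step from \<open>y\<close> along a normal separating \<open>u\<close>
  from the cone of active normals stays feasible and decreases \<open>\<langle>u, -\<rangle>\<close>.\<close>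
lemma farkas_active_normals:
  fixes A :: "((real^'n) \<times> real) set" and u y :: "real^'n"
  assumes fin: "finite A"
    and y: "\<forall>(c,d)\<in>A. d \<le> c \<bullet> y"
    and min: "\<And>x. \<forall>(c,d)\<in>A. d \<le> c \<bullet> x \<Longrightarrow> u \<bullet> y \<le> u \<bullet> x"
  obtains l where "\<forall>c\<in>{c. \<exists>d. (c,d)\<in>A \<and> c \<bullet> y = d}. l c \<ge> 0"
    "u = (\<Sum>c\<in>{c. \<exists>d. (c,d)\<in>A \<and> c \<bullet> y = d}. l c *\<^sub>R c)"
proof -
  define K where "K = {c. \<exists>d. (c,d)\<in>A \<and> c \<bullet> y = d}"
  have finK: "finite K"
  proof -
    have "K \<subseteq> fst ` A" unfolding K_def by force
    then show ?thesis using fin finite_subset by blast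
  qed
  have "u \<in> convex_cone hull K"
  proof (rule ccontr)
    assume "u \<notin> convex_cone hull K"
    then obtain z where z: "u \<bullet> z < 0" "\<And>c. c \<in> K \<Longrightarrow> c \<bullet> z \<ge> 0"
      using finite_cone_separation[OF finK] by blast
    define I where "I = {(c,d)\<in>A. c \<bullet> y \<noteq> d}"
    have "finite I" using fin unfolding I_def by (auto intro: finite_subset)
    moreover have "fst i \<bullet> y - snd i > 0" if "i \<in> I" for i
      using that y unfolding I_def by fastforce
    ultimately obtain e where e: "e > 0" "\<And>i. i \<in> I \<Longrightarrow> e * (- (fst i \<bullet> z)) < fst i \<bullet> y - snd i"
      using finite_ex_pos_mult_less[of I "\<lambda>i. fst i \<bullet> y - snd i" "\<lambda>i. - (fst i \<bullet> z)"] by blast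
    have "\<forall>(c,d)\<in>A. d \<le> c \<bullet> (y + e *\<^sub>R z)"
    proof clarify
      fix c d assume cd: "(c,d) \<in> A"
      show "d \<le> c \<bullet> (y + e *\<^sub>R z)"
      proof (cases "c \<bullet> y = d")
        case True
        then have "0 \<le> c \<bullet> z" using z(2) cd unfolding K_def by blast
        then show ?thesis using True e(1) by (simp add: inner_add_right)
      next
        case False
        then have "(c,d) \<in> I" using cd unfolding I_def by blast
        then show ?thesis using e(2)[of "(c,d)"] by (simp add: inner_add_right)
      qed
    qed
    then have "u \<bullet> y \<le> u \<bullet> (y + e *\<^sub>R z)" by (rule min)
    moreover have "e * (u \<bullet> z) < 0" using z(1) e(1) by (simp add: mult_pos_neg)
    ultimately show False by (simp add: inner_add_right)
  qed
  then show ?thesis using convex_cone_hull_finite_nonneg_combination[OF finK] that unfolding K_def by blast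
qed

lemma rel_interior_minimizer_orthogonal:
  fixes G :: "'a::euclidean_space set"
  assumes p: "p \<in> rel_interior G" and u: "\<forall>x\<in>G. u \<bullet> p \<le> u \<bullet> x" and g: "g \<in> G"
  shows "u \<bullet> (g - p) = 0"
proof -
  define d where "d = g - p"
  have pG: "p \<in> G" using p rel_interior_subset by blast
  obtain e where e: "e > 0" "ball p e \<inter> affine hull G \<subseteq> G" using p unfolding mem_rel_interior_ball by blast
  define \<delta> where "\<delta> = e / (2 * (norm d + 1))"
  have dd: "norm d + 1 > 0" using norm_ge_zero[of d] by linarith
  have \<delta>0: "\<delta> > 0" unfolding \<delta>_def using e dd by simp
  have "norm (\<delta> *\<^sub>R d) = \<delta> * norm d" using \<delta>0 by simp
  also have "\<dots> < \<delta> * (2 * (norm d + 1))" using \<delta>0 dd by (intro mult_strict_left_mono) auto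
  also have "\<dots> = e" unfolding \<delta>_def using dd by simp
  finally have small: "norm (\<delta> *\<^sub>R d) < e" .
  have inG: "p + s *\<^sub>R d \<in> G" if s: "\<bar>s\<bar> = \<delta>" for s
  proof -
    have "p + s *\<^sub>R d = (1 - s) *\<^sub>R p + s *\<^sub>R g" unfolding d_def by (simp add: algebra_simps)
    moreover have "(1 - s) *\<^sub>R p + s *\<^sub>R g \<in> affine hull G"
      by (intro mem_affine[OF affine_affine_hull]) (auto simp: pG g hull_inc)
    moreover have "p + s *\<^sub>R d \<in> ball p e" using small s by (simp add: dist_norm)
    ultimately show ?thesis using e(2) by auto
  qed
  have "u \<bullet> p \<le> u \<bullet> (p + \<delta> *\<^sub>R d)" using u inG[of \<delta>] \<delta>0 by auto
  then have "0 \<le> \<delta> * (u \<bullet> d)" by (simp add: inner_add_right)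
  moreover have "u \<bullet> p \<le> u \<bullet> (p + (- \<delta>) *\<^sub>R d)" using u inG[of "- \<delta>"] \<delta>0 by auto
  then have "0 \<le> - (\<delta> * (u \<bullet> d))" by (simp add: inner_add_right inner_diff_right)
  ultimately have "\<delta> * (u \<bullet> d) = 0" by linarith
  then show ?thesis using \<delta>0 unfolding d_def by simp
qed

lemma extreme_point_symmetric_eq_0:
  assumes v: "v extreme_point_of S" and "v + z \<in> S" "v - z \<in> S"
  shows "z = 0"
proof (rule ccontr)
  assume z0: "z \<noteq> 0"
  have "v - z \<noteq> v + z"
  proof
    assume "v - z = v + z"
    then have "2 *\<^sub>R z = 0" by (simp add: scaleR_2 algebra_simps)
    then show False using z0 by simp
  qed
  moreover have "(v - z) + (v + z) = 2 *\<^sub>R v" by (simp add: scaleR_2)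
  then have "midpoint (v - z) (v + z) = v" unfolding midpoint_def by simp
  ultimately have "v \<in> open_segment (v - z) (v + z)" using midpoint_in_open_segment by metis
  then show False using v assms(2,3) unfolding extreme_point_of_def by blast
qed

section \<open>Normal fans of polytopes\<close>

definition minimizers :: "(real^'n) set \<Rightarrow> real^'n \<Rightarrow> (real^'n) set" where
  "minimizers Q u = {y\<in>Q. \<forall>x\<in>Q. u \<bullet> y \<le> u \<bullet> x}"

lemma minimizers_face_of:
  fixes Q :: "(real^'n) set"
  assumes "compact Q" "convex Q" "Q \<noteq> {}"
  shows "minimizers Q u face_of Q"
proof -
  have "continuous_on Q (\<lambda>x. u \<bullet> x)" by (intro continuous_intros)
  then obtain y0 where y0: "y0 \<in> Q" "\<forall>x\<in>Q. u \<bullet> y0 \<le> u \<bullet> x"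
    using continuous_attains_inf[OF assms(1) assms(3)] by blast
  have "minimizers Q u = Q \<inter> {x. u \<bullet> x = u \<bullet> y0}"
    unfolding minimizers_def using y0 by (auto intro: order_antisym)
  moreover have "(Q \<inter> {x. u \<bullet> x = u \<bullet> y0}) face_of Q"
    by (rule face_of_Int_supporting_hyperplane_ge[OF assms(2)]) (use y0 in auto)
  ultimately show ?thesis by simp
qed

lemma convex_normal_cone: "convex (normal_cone Q F)"
proof -
  have "normal_cone Q F = (\<Inter>x\<in>Q. \<Inter>y\<in>F. {u. (x - y) \<bullet> u \<ge> 0})"
    unfolding normal_cone_def by (force simp: inner_commute[of "_ - _"] inner_diff_right)
  then show ?thesis by (simp add: convex_INT convex_halfspace_ge)
qed

lemma normal_cone_eq_Inter_vertex_cones: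
  assumes "W \<subseteq> F" "F \<subseteq> Q" and min: "\<And>u. W \<subseteq> minimizers Q u \<Longrightarrow> F \<subseteq> minimizers Q u"
  shows "normal_cone Q F = {u. \<forall>y\<in>W. u \<in> normal_cone Q {y}}"
proof -
  have "u \<in> normal_cone Q F \<longleftrightarrow> F \<subseteq> minimizers Q u" for u
    using assms(2) unfolding normal_cone_def minimizers_def by auto
  moreover have "(\<forall>y\<in>W. u \<in> normal_cone Q {y}) \<longleftrightarrow> W \<subseteq> minimizers Q u" for u
    using assms(1,2) unfolding normal_cone_def minimizers_def by auto
  ultimately show ?thesis using assms(1) min by blast
qed

lemma normal_fan_eq_vertex_cone_Inters:
  fixes Q :: "(real^'n) set"
  assumes cQ: "compact Q" and vQ: "convex Q"
  shows "normal_fan Q = {{u. \<forall>y\<in>W. u \<in> normal_cone Q {y}} | W. W \<subseteq> {y. y extreme_point_of Q} \<and> W \<noteq> {}}"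
    (is "_ = ?R")
proof
  show "normal_fan Q \<subseteq> ?R"
  proof
    fix \<sigma> assume "\<sigma> \<in> normal_fan Q"
    then obtain F where F: "F face_of Q" "F \<noteq> {}" "\<sigma> = normal_cone Q F" unfolding normal_fan_def by blast
    define W where "W = {y. y extreme_point_of F}"
    have cF: "compact F" by (rule face_of_imp_compact[OF vQ cQ F(1)])
    have vF: "convex F" using F(1) by (rule face_of_imp_convex)
    have FQ: "F \<subseteq> Q" using F(1) by (rule face_of_imp_subset)
    have "\<sigma> = {u. \<forall>y\<in>W. u \<in> normal_cone Q {y}}"
      unfolding F(3)
    proof (rule normal_cone_eq_Inter_vertex_cones[OF _ FQ])
      show "W \<subseteq> F" unfolding W_def extreme_point_of_def by blast
      fix u assume "W \<subseteq> minimizers Q u"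
      moreover have "convex (minimizers Q u)"
        using minimizers_face_of[OF cQ vQ] FQ F(2) face_of_imp_convex by blast
      ultimately show "F \<subseteq> minimizers Q u"
        using Krein_Milman_Minkowski[OF cF vF] unfolding W_def by (metis hull_minimal)
    qed
    moreover have "W \<subseteq> {y. y extreme_point_of Q}" unfolding W_def using extreme_point_of_face[OF F(1)] by blast
    moreover have "W \<noteq> {}" unfolding W_def using extreme_point_exists_convex[OF cF vF F(2)] by blast
    ultimately show "\<sigma> \<in> ?R" by blast
  qed
  show "?R \<subseteq> normal_fan Q"
  proof
    fix \<sigma> assume "\<sigma> \<in> ?R"
    then obtain W where W: "W \<subseteq> {y. y extreme_point_of Q}" "W \<noteq> {}"
      "\<sigma> = {u. \<forall>y\<in>W. u \<in> normal_cone Q {y}}" by blast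
    have WQ: "W \<subseteq> Q" using W(1) unfolding extreme_point_of_def by blast
    define G where "G = \<Inter>{F. F face_of Q \<and> W \<subseteq> F}"
    have "{F. F face_of Q \<and> W \<subseteq> F} \<noteq> {}" using face_of_refl[OF vQ] WQ by blast
    then have Gf: "G face_of Q" unfolding G_def by (rule face_of_Inter) blast
    have WG: "W \<subseteq> G" unfolding G_def by blast
    have "normal_cone Q G = \<sigma>"
      unfolding W(3)
    proof (rule normal_cone_eq_Inter_vertex_cones[OF WG face_of_imp_subset[OF Gf]])
      fix u assume "W \<subseteq> minimizers Q u"
      moreover have "minimizers Q u face_of Q" using minimizers_face_of[OF cQ vQ] WQ W(2) by blast
      ultimately show "G \<subseteq> minimizers Q u" unfolding G_def by blast
    qed
    moreover have "G \<noteq> {}" using WG W(2) by blast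
    ultimately show "\<sigma> \<in> normal_fan Q" using Gf unfolding normal_fan_def by blast
  qed
qed

lemma normal_fan_eq_if_vertex_cones_eq:
  fixes Q1 Q2 :: "(real^'n) set"
  assumes "compact Q1" "convex Q1" "compact Q2" "convex Q2"
    and E: "{y. y extreme_point_of Q2} = f ` {y. y extreme_point_of Q1}"
    and N: "\<And>y. y extreme_point_of Q1 \<Longrightarrow> normal_cone Q2 {f y} = normal_cone Q1 {y}"
  shows "normal_fan Q2 = normal_fan Q1"
proof -
  let ?E1 = "{y. y extreme_point_of Q1}"
  let ?C1 = "\<lambda>W. {u. \<forall>y\<in>W. u \<in> normal_cone Q1 {y}}" and ?C2 = "\<lambda>W. {u. \<forall>y\<in>W. u \<in> normal_cone Q2 {y}}"
  have image_cone: "?C2 (f ` W) = ?C1 W" if "W \<subseteq> ?E1" for W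
  proof -
    have "(\<forall>y\<in>f ` W. u \<in> normal_cone Q2 {y}) \<longleftrightarrow> (\<forall>y\<in>W. u \<in> normal_cone Q1 {y})" for u
      using N that by (simp add: subset_eq)
    then show ?thesis by blast
  qed
  have "{?C2 W | W. W \<subseteq> f ` ?E1 \<and> W \<noteq> {}} = {?C1 W | W. W \<subseteq> ?E1 \<and> W \<noteq> {}}"
  proof (intro equalityI subsetI)
    fix \<sigma> assume "\<sigma> \<in> {?C2 W | W. W \<subseteq> f ` ?E1 \<and> W \<noteq> {}}"
    then obtain W2 where W2: "W2 \<subseteq> f ` ?E1" "W2 \<noteq> {}" "\<sigma> = ?C2 W2" by blast
    define W1 where "W1 = {y\<in>?E1. f y \<in> W2}"
    have "W2 = f ` W1" using W2(1) unfolding W1_def by blast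
    moreover have "W1 \<subseteq> ?E1" unfolding W1_def by blast
    ultimately show "\<sigma> \<in> {?C1 W | W. W \<subseteq> ?E1 \<and> W \<noteq> {}}"
      using W2(2,3) image_cone[of W1] by blast
  next
    fix \<sigma> assume "\<sigma> \<in> {?C1 W | W. W \<subseteq> ?E1 \<and> W \<noteq> {}}"
    then obtain W1 where W1: "W1 \<subseteq> ?E1" "W1 \<noteq> {}" "\<sigma> = ?C1 W1" by blast
    have "f ` W1 \<subseteq> f ` ?E1" "f ` W1 \<noteq> {}" using W1 by auto
    then show "\<sigma> \<in> {?C2 W | W. W \<subseteq> f ` ?E1 \<and> W \<noteq> {}}"
      using W1(3) image_cone[OF W1(1)] by blast
  qed
  then show ?thesis
    unfolding normal_fan_eq_vertex_cone_Inters[OF assms(1,2)] normal_fan_eq_vertex_cone_Inters[OF assms(3,4)] E .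
qed

section \<open>Facet inequalities of lattice polytopes\<close>

lemma facet_of_scaleR_image_iff:
  fixes P G :: "(real^'n) set"
  assumes c: "c > 0"
  shows "((\<lambda>x. c *\<^sub>R x) ` G facet_of (\<lambda>x. c *\<^sub>R x) ` P) \<longleftrightarrow> G facet_of P"
proof -
  let ?f = "\<lambda>x::real^'n. c *\<^sub>R x"
  have lin: "linear ?f" by (intro linearI) (auto simp: scaleR_add_right)
  have inj: "inj ?f" using c unfolding inj_def by simp
  show ?thesis unfolding facet_of_def
    using face_of_linear_image[OF lin inj] aff_dim_injective_linear_image[OF lin inj] by simp
qed

lemma facet_ineqs_scaleR_image_iff:
  fixes P :: "(real^'n) set"
  assumes c: "c > 0"
  shows "(a,b) \<in> facet_ineqs ((\<lambda>x. c *\<^sub>R x) ` P) \<longleftrightarrow> (a, b / c) \<in> facet_ineqs P"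
proof -
  let ?f = "\<lambda>x::real^'n. c *\<^sub>R x"
  have "(\<forall>y\<in>?f ` P. b \<le> a \<bullet> y) \<longleftrightarrow> (\<forall>x\<in>P. b / c \<le> a \<bullet> x)"
    using c by (simp add: pos_divide_le_eq mult.commute)
  moreover have "{y\<in>?f ` P. a \<bullet> y = b} = ?f ` {x\<in>P. a \<bullet> x = b / c}"
    using c by (force simp: field_simps)
  ultimately show ?thesis unfolding facet_ineqs_def by (simp add: facet_of_scaleR_image_iff[OF c])
qed

lemma facet_ineqs_scaleR_image:
  fixes P :: "(real^'n) set"
  assumes c: "c > 0"
  shows "facet_ineqs ((\<lambda>x. c *\<^sub>R x) ` P) = (\<lambda>(a,b). (a, c * b)) ` facet_ineqs P"
proof (intro equalityI subsetI)
  fix ab assume "ab \<in> facet_ineqs ((\<lambda>x. c *\<^sub>R x) ` P)"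
  moreover obtain a b where "ab = (a,b)" by force
  ultimately have "(a, b / c) \<in> facet_ineqs P" using facet_ineqs_scaleR_image_iff[OF c, of a b P] by blast
  moreover have "(a,b) = (\<lambda>(a,b). (a, c * b)) (a, b / c)" using c by simp
  ultimately show "ab \<in> (\<lambda>(a,b). (a, c * b)) ` facet_ineqs P" using \<open>ab = (a,b)\<close> by blast
next
  fix ab assume "ab \<in> (\<lambda>(a,b). (a, c * b)) ` facet_ineqs P"
  then obtain a b where "ab = (a, c * b)" "(a,b) \<in> facet_ineqs P" by auto
  then show "ab \<in> facet_ineqs ((\<lambda>x. c *\<^sub>R x) ` P)"
    using facet_ineqs_scaleR_image_iff[OF c, of a "c * b" P] c by simp
qed

lemma mem_inner_par_iff:
  assumes "finite (facet_ineqs Q)" "facet_ineqs Q \<noteq> {}"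
  shows "x \<in> inner_par Q s \<longleftrightarrow> (\<forall>(a,b)\<in>facet_ineqs Q. s \<le> a \<bullet> x - b)"
  unfolding inner_par_def lattice_dist_def using assms by (auto simp: Min_ge_iff)

locale full_dim_lattice_polytope =
  fixes P :: "(real^'n) set"
  assumes lattice: "lattice_polytope P" and full_dim: "aff_dim P = int CARD('n)"
begin

abbreviation ineqs where "ineqs \<equiv> facet_ineqs P"

lemma lattice_vertices: obtains V where "finite V" "V \<noteq> {}" "\<forall>v\<in>V. int_vec v" "P = convex hull V"
  using lattice unfolding lattice_polytope_def by blast

lemma polytope_P: "polytope P" using lattice_vertices unfolding polytope_def by metis
lemma polyhedron_P: "polyhedron P" using polytope_P polytope_imp_polyhedron by blast
lemma compact_P: "compact P" using polytope_P polytope_imp_compact by blast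
lemma convex_P: "convex P" using lattice_vertices by (metis convex_convex_hull)
lemma P_nonempty: "P \<noteq> {}" using lattice_vertices by (metis convex_hull_eq_empty)
lemma affine_hull_P: "affine hull P = UNIV" using full_dim aff_dim_eq_full[of P] by simp

lemma ineqsD:
  assumes "(a,b) \<in> ineqs"
  shows "primitive_vec a" "\<forall>x\<in>P. b \<le> a \<bullet> x" "{x\<in>P. a \<bullet> x = b} facet_of P"
  using assms unfolding facet_ineqs_def by auto

lemma dim_translated_facet:
  assumes G: "G facet_of P" and p: "p \<in> G"
  shows "dim ((\<lambda>x. x - p) ` G) = CARD('n) - 1"
proof -
  have "aff_dim G = aff_dim P - 1" using G unfolding facet_of_def by simp
  moreover have "aff_dim G = int (dim ((+) (- p) ` G))" using p by (intro aff_dim_eq_dim) (simp add: hull_inc)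
  moreover have "(+) (- p) ` G = (\<lambda>x. x - p) ` G" by (auto simp: algebra_simps)
  ultimately show ?thesis using full_dim by simp
qed

text \<open>A facet is the convex hull of lattice points spanning a hyperplane, so that hyperplane
  has an integral normal.\<close>
lemma facet_normal_int_multiple:
  assumes G: "G facet_of P" and a0: "a \<noteq> 0" and Geq: "G = P \<inter> {x. a \<bullet> x = b}"
  obtains \<mu> where "\<mu> \<noteq> 0" "int_vec (\<mu> *\<^sub>R a)"
proof -
  obtain V where V: "finite V" "\<forall>v\<in>V. int_vec v" "P = convex hull V" by (rule lattice_vertices)
  have "G face_of convex hull V" using G V(3) by (simp add: facet_of_imp_face_of)
  then obtain S where S: "S \<subseteq> V" "G = convex hull S"
    using face_of_convex_hull_subset[OF finite_imp_compact[OF V(1)]] by blast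
  have "S \<noteq> {}" using G S(2) unfolding facet_of_def by auto
  then obtain g0 where g0: "g0 \<in> S" by blast
  have g0G: "g0 \<in> G" unfolding S(2) using g0 by (rule hull_inc)
  define D where "D = (\<lambda>x. x - g0) ` S"
  have finD: "finite D" unfolding D_def using S(1) V(1) finite_subset by blast
  have intD: "\<forall>d\<in>D. int_vec d" unfolding D_def using S(1) V(2) g0 by (auto intro: int_vec_diff)
  have "aff_dim G = aff_dim S" using S by (simp add: aff_dim_convex_hull)
  moreover have "aff_dim S = int (dim ((+) (- g0) ` S))" using g0 by (intro aff_dim_eq_dim) (simp add: hull_inc)
  moreover have "(+) (- g0) ` S = D" unfolding D_def by (auto simp: algebra_simps)
  moreover have "aff_dim G = aff_dim P - 1" using G unfolding facet_of_def by simp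
  ultimately have dimD: "dim D = CARD('n) - 1" using full_dim by simp
  then have "dim D < CARD('n)" by simp
  then obtain c where c: "int_vec c" "c \<noteq> 0" "\<forall>d\<in>D. c \<bullet> d = 0"
    using int_vec_orthogonal_exists[OF finD intD] by blast
  have "\<forall>d\<in>D. a \<bullet> d = 0"
    unfolding D_def using g0G Geq S(2) by (auto simp: inner_diff_right dest: hull_inc)
  then obtain \<mu> where "c = \<mu> *\<^sub>R a" using orthogonal_hyperplane_parallel[OF a0 _ c(3) dimD] by blast
  then show ?thesis using that c(1,2) by auto
qed

lemma facet_has_ineq:
  assumes G: "G facet_of P" and a0: "a \<noteq> 0" and Pa: "P \<subseteq> {x. a \<bullet> x \<le> b}" and Geq: "G = P \<inter> {x. a \<bullet> x = b}"
  obtains l where "l > 0" "((- l) *\<^sub>R a, - l * b) \<in> ineqs"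
proof -
  obtain \<mu> where mu: "\<mu> \<noteq> 0" "int_vec (\<mu> *\<^sub>R a)" by (rule facet_normal_int_multiple[OF G a0 Geq])
  have c_int: "int_vec ((- \<bar>\<mu>\<bar>) *\<^sub>R a)"
  proof (cases "\<mu> < 0")
    case True then show ?thesis using mu(2) by simp
  next
    case False then show ?thesis using int_vec_scaleR_of_int[OF mu(2), of "-1"] by simp
  qed
  moreover have "(- \<bar>\<mu>\<bar>) *\<^sub>R a \<noteq> 0" using mu(1) a0 by simp
  ultimately obtain m :: int where m: "m \<ge> 1" "primitive_vec ((1 / real_of_int m) *\<^sub>R (- \<bar>\<mu>\<bar>) *\<^sub>R a)"
    by (rule primitive_vec_divisor_exists)
  define l where "l = \<bar>\<mu>\<bar> / real_of_int m"
  have l0: "l > 0" unfolding l_def using mu(1) m(1) by simp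
  have "((- l) *\<^sub>R a, - l * b) \<in> ineqs"
    unfolding facet_ineqs_def
  proof (clarify, intro conjI)
    show "primitive_vec ((- l) *\<^sub>R a)" using m(2) unfolding l_def by simp
    show "\<forall>x\<in>P. - l * b \<le> (- l) *\<^sub>R a \<bullet> x"
      using Pa l0 by (auto intro: mult_left_mono)
    have "{x \<in> P. (- l) *\<^sub>R a \<bullet> x = - l * b} = G" using Geq l0 by auto
    then show "{x \<in> P. (- l) *\<^sub>R a \<bullet> x = - l * b} facet_of P" using G by simp
  qed
  then show ?thesis using l0 that by blast
qed

lemma minimal_halfspace_representation: obtains F a b where "finite F" "P = \<Inter>F"
   "\<And>h. h \<in> F \<Longrightarrow> a h \<noteq> 0 \<and> h = {x. a h \<bullet> x \<le> b h}"
   "\<And>F'. F' \<subset> F \<Longrightarrow> P \<subset> affine hull P \<inter> \<Inter>F'"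
   "\<And>h. h \<in> F \<Longrightarrow> (P \<inter> {x. a h \<bullet> x = b h}) facet_of P"
proof -
  obtain F where F: "finite F" "P = affine hull P \<inter> \<Inter>F"
      "\<And>h. h \<in> F \<Longrightarrow> \<exists>a b. a \<noteq> 0 \<and> h = {x. a \<bullet> x \<le> b}"
      "\<And>F'. F' \<subset> F \<Longrightarrow> P \<subset> affine hull P \<inter> \<Inter>F'"
    using polyhedron_P by (simp add: polyhedron_Int_affine_minimal) meson
  then obtain a b where ab: "\<And>h. h \<in> F \<Longrightarrow> a h \<noteq> 0 \<and> h = {x. a h \<bullet> x \<le> b h}"
    by metis
  have "(P \<inter> {x. a h \<bullet> x = b h}) facet_of P" if "h \<in> F" for h
    using facet_of_polyhedron_explicit[OF F(1) F(2) ab F(4)] that by blast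
  note fac = this
  have "P = \<Inter>F" using F(2) affine_hull_P by simp
  show ?thesis by (rule that[of F a b, OF F(1) \<open>P = \<Inter>F\<close> ab F(4) fac])
qed

lemma P_eq_ineqs: "P = {x. \<forall>(a,b)\<in>ineqs. b \<le> a \<bullet> x}"
proof
  show "P \<subseteq> {x. \<forall>(a,b)\<in>ineqs. b \<le> a \<bullet> x}" using ineqsD by blast
  show "{x. \<forall>(a,b)\<in>ineqs. b \<le> a \<bullet> x} \<subseteq> P"
  proof
    fix x assume x: "x \<in> {x. \<forall>(a,b)\<in>ineqs. b \<le> a \<bullet> x}"
    obtain F a b where F: "finite F" "P = \<Inter>F"
      "\<And>h. h \<in> F \<Longrightarrow> a h \<noteq> 0 \<and> h = {x. a h \<bullet> x \<le> b h}"
      "\<And>h. h \<in> F \<Longrightarrow> (P \<inter> {x. a h \<bullet> x = b h}) facet_of P"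
      by (rule minimal_halfspace_representation) blast
    have "x \<in> h" if h: "h \<in> F" for h
    proof -
      have Pa: "P \<subseteq> {x. a h \<bullet> x \<le> b h}" using F(2,3) h by blast
      obtain l where l: "l > 0" "((- l) *\<^sub>R a h, - l * b h) \<in> ineqs"
        using facet_has_ineq[OF F(4)[OF h] _ Pa refl] F(3)[OF h] by metis
      then have "- l * b h \<le> (- l) *\<^sub>R a h \<bullet> x" using x by blast
      then have "a h \<bullet> x \<le> b h" using l(1) by simp
      then show ?thesis using F(3)[OF h] by blast
    qed
    then show "x \<in> P" using F(2) by blast
  qed
qed

lemma ineq_not_tight:
  assumes "(a,b) \<in> ineqs" shows "\<exists>x\<in>P. b < a \<bullet> x"
proof (rule ccontr)
  assume "\<not> ?thesis"
  then have "\<forall>x\<in>P. a \<bullet> x = b" using ineqsD(2)[OF assms] by force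
  then have "{x\<in>P. a \<bullet> x = b} = P" by blast
  then show False using ineqsD(3)[OF assms] facet_of_irrefl by metis
qed

lemma ineq_normal_nonzero: "(a,b) \<in> ineqs \<Longrightarrow> a \<noteq> 0" using ineqsD(1) unfolding primitive_vec_def by blast

lemma ineq_facet_nonempty: "(a,b) \<in> ineqs \<Longrightarrow> {x\<in>P. a \<bullet> x = b} \<noteq> {}"
  using ineqsD(3) unfolding facet_of_def by blast

lemma ineq_offset_unique:
  assumes "(a,b) \<in> ineqs" "(a,b') \<in> ineqs" shows "b = b'"
proof -
  obtain x where x: "x \<in> P" "a \<bullet> x = b" using ineq_facet_nonempty[OF assms(1)] by blast
  obtain x' where x': "x' \<in> P" "a \<bullet> x' = b'" using ineq_facet_nonempty[OF assms(2)] by blast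
  have "b' \<le> a \<bullet> x" using ineqsD(2)[OF assms(2)] x(1) by blast
  moreover have "b \<le> a \<bullet> x'" using ineqsD(2)[OF assms(1)] x'(1) by blast
  ultimately show ?thesis using x x' by linarith
qed

lemma facet_orthogonal_parallel:
  assumes ab: "(a,b) \<in> ineqs" and p: "p \<in> {x\<in>P. a \<bullet> x = b}"
    and u: "\<forall>g\<in>{x\<in>P. a \<bullet> x = b}. u \<bullet> (g - p) = 0"
  obtains c where "u = c *\<^sub>R a"
proof -
  define D where "D = (\<lambda>x. x - p) ` {x\<in>P. a \<bullet> x = b}"
  have "dim D = CARD('n) - 1" unfolding D_def by (rule dim_translated_facet[OF ineqsD(3)[OF ab] p])
  moreover have "\<forall>d\<in>D. a \<bullet> d = 0" using p unfolding D_def by (auto simp: inner_diff_right)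
  moreover have "\<forall>d\<in>D. u \<bullet> d = 0" using u unfolding D_def by auto
  ultimately show ?thesis using orthogonal_hyperplane_parallel[OF ineq_normal_nonzero[OF ab]] that by blast
qed

lemma facet_supporting_multiple_nonneg:
  assumes ab: "(a,b) \<in> ineqs" and p: "a \<bullet> p = b" and u: "\<forall>x\<in>P. (c *\<^sub>R a) \<bullet> p \<le> (c *\<^sub>R a) \<bullet> x"
  shows "c \<ge> 0"
proof -
  obtain x where x: "x \<in> P" "b < a \<bullet> x" using ineq_not_tight[OF ab] by blast
  then have "0 \<le> c * (a \<bullet> x - b)" using u p by (simp add: right_diff_distrib)
  then show ?thesis using x(2) by (simp add: zero_le_mult_iff)
qed

lemma ineq_unique_for_facet:
  assumes ab: "(a,b) \<in> ineqs" and ab': "(a',b') \<in> ineqs" and eq: "{x\<in>P. a \<bullet> x = b} = {x\<in>P. a' \<bullet> x = b'}"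
  shows "a = a' \<and> b = b'"
proof -
  obtain p where p: "p \<in> {x\<in>P. a \<bullet> x = b}" using ineq_facet_nonempty[OF ab] by blast
  then obtain \<mu> where mu: "a' = \<mu> *\<^sub>R a"
    using facet_orthogonal_parallel[OF ab] eq by (auto simp: inner_diff_right)
  have bb: "b' = \<mu> * b" using p eq mu by auto
  have "\<mu> \<ge> 0" using facet_supporting_multiple_nonneg[OF ab] p eq ineqsD(2)[OF ab'] mu by auto
  moreover have "\<mu> \<noteq> 0" using mu ineq_normal_nonzero[OF ab'] by auto
  ultimately have "\<mu> = 1"
    using primitive_vec_pos_multiple_eq_1[OF ineqsD(1)[OF ab]] ineqsD(1)[OF ab'] mu by simp
  then show ?thesis using mu bb by simp
qed

lemma finite_ineqs: "finite ineqs"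
proof -
  let ?f = "\<lambda>(a,b). {x\<in>P. a \<bullet> x = b}"
  have "inj_on ?f ineqs" unfolding inj_on_def using ineq_unique_for_facet by fast
  moreover have "?f ` ineqs \<subseteq> {F. F facet_of P}" using ineqsD(3) by auto
  then have "finite (?f ` ineqs)" using finite_polyhedron_facets[OF polyhedron_P] finite_subset by blast
  ultimately show ?thesis using finite_imageD by blast
qed

lemma ineqs_nonempty: "ineqs \<noteq> {}"
proof
  assume "ineqs = {}"
  then have "P = UNIV" using P_eq_ineqs by simp
  then show False using compact_P not_bounded_UNIV compact_imp_bounded by metis
qed

lemma facet_supporting_normal_parallel:
  assumes ab: "(a,b) \<in> ineqs" and p: "p \<in> rel_interior {x\<in>P. a \<bullet> x = b}"
    and u: "\<forall>x\<in>P. u \<bullet> p \<le> u \<bullet> x"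
  obtains c where "c \<ge> 0" "u = c *\<^sub>R a"
proof -
  have pG: "p \<in> {x\<in>P. a \<bullet> x = b}" using p rel_interior_subset by blast
  then obtain c where c: "u = c *\<^sub>R a"
    using facet_orthogonal_parallel[OF ab] rel_interior_minimizer_orthogonal[OF p] u by blast
  then have "c \<ge> 0" using facet_supporting_multiple_nonneg[OF ab] pG u by auto
  then show ?thesis using c that by blast
qed

section \<open>Vertex cones\<close>

definition "verts = {v. v extreme_point_of P}"

lemma finite_verts: "finite verts" unfolding verts_def by (rule finite_polyhedron_extreme_points[OF polyhedron_P])

lemma P_eq_convex_hull_verts: "P = convex hull verts"
  unfolding verts_def using Krein_Milman_Minkowski[OF compact_P convex_P] .

lemma verts_nonempty: "verts \<noteq> {}" using P_eq_convex_hull_verts P_nonempty by auto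

lemma vert_in_P: "v \<in> verts \<Longrightarrow> v \<in> P" unfolding verts_def extreme_point_of_def by blast

lemma int_vec_vert: "v \<in> verts \<Longrightarrow> int_vec v"
proof -
  assume v: "v \<in> verts"
  obtain V where V: "finite V" "V \<noteq> {}" "\<forall>v\<in>V. int_vec v" "P = convex hull V" by (rule lattice_vertices)
  have "v extreme_point_of convex hull V" using v V(4) unfolding verts_def by simp
  then have "v \<in> V" by (rule extreme_point_of_convex_hull)
  then show ?thesis using V(3) by blast
qed

lemma active_orthogonal_eq_0:
  assumes v: "v \<in> verts" and z: "\<forall>(a,b)\<in>ineqs. a \<bullet> v = b \<longrightarrow> a \<bullet> z = 0"
  shows "z = 0"
proof -
  define I where "I = {(a,b)\<in>ineqs. a \<bullet> v \<noteq> b}"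
  have "finite I" using finite_ineqs unfolding I_def by (auto intro: finite_subset)
  moreover have "fst i \<bullet> v - snd i > 0" if "i \<in> I" for i
    using that ineqsD(2) vert_in_P[OF v] unfolding I_def by fastforce
  ultimately obtain e where e: "e > 0" "\<And>i. i \<in> I \<Longrightarrow> e * \<bar>fst i \<bullet> z\<bar> < fst i \<bullet> v - snd i"
    using finite_ex_pos_mult_less[of I "\<lambda>i. fst i \<bullet> v - snd i" "\<lambda>i. \<bar>fst i \<bullet> z\<bar>"] by blast
  have inP: "v + s *\<^sub>R z \<in> P" if s: "\<bar>s\<bar> = e" for s
  proof -
    have "b \<le> a \<bullet> (v + s *\<^sub>R z)" if ab: "(a,b) \<in> ineqs" for a b
    proof (cases "a \<bullet> v = b")
      case True
      then show ?thesis using z ab by (auto simp: inner_add_right)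
    next
      case False
      then have "e * \<bar>a \<bullet> z\<bar> < a \<bullet> v - b" using ab e(2)[of "(a,b)"] unfolding I_def by simp
      moreover have "\<bar>s * (a \<bullet> z)\<bar> = e * \<bar>a \<bullet> z\<bar>" using s by (simp add: abs_mult)
      then have "- (e * \<bar>a \<bullet> z\<bar>) \<le> s * (a \<bullet> z)" by linarith
      ultimately show ?thesis by (simp add: inner_add_right)
    qed
    then show ?thesis using P_eq_ineqs by blast
  qed
  have "v + e *\<^sub>R z \<in> P" "v - e *\<^sub>R z \<in> P" using inP[of e] inP[of "- e"] e(1) by auto
  then have "e *\<^sub>R z = 0" using v unfolding verts_def by (intro extreme_point_symmetric_eq_0) auto
  then show ?thesis using e(1) by simp
qed

definition "vcone v = normal_cone P {v}"

lemma vcone_iff: "u \<in> vcone v \<longleftrightarrow> (\<forall>x\<in>P. u \<bullet> v \<le> u \<bullet> x)"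
  unfolding vcone_def normal_cone_def by auto

definition "active t y = {a. \<exists>b. (a,b)\<in>ineqs \<and> a \<bullet> y = b + t}"

lemma finite_active: "finite (active t y)"
proof -
  have "active t y \<subseteq> fst ` ineqs" unfolding active_def by force
  then show ?thesis using finite_ineqs finite_subset by blast
qed

lemma convex_vcone: "convex (vcone v)"
  unfolding vcone_def by (rule convex_normal_cone)

lemma active_normal_in_vcone: "(a,b) \<in> ineqs \<Longrightarrow> a \<bullet> v = b \<Longrightarrow> a \<in> vcone v"
  using ineqsD(2) unfolding vcone_iff by auto

lemma vcone_in_normal_fan: "v \<in> verts \<Longrightarrow> vcone v \<in> normal_fan P"
  unfolding normal_fan_def vcone_def verts_def using face_of_singleton by blast

lemma active_0: "active 0 v = {a. \<exists>b. (a,b)\<in>ineqs \<and> a \<bullet> v = b}" unfolding active_def by simp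

lemma active_sum_unique_minimizer:
  assumes v: "v \<in> verts" and y: "y \<in> P" and le: "(\<Sum>a\<in>active 0 v. a) \<bullet> y \<le> (\<Sum>a\<in>active 0 v. a) \<bullet> v"
  shows "y = v"
proof -
  have nn: "\<forall>a\<in>active 0 v. 0 \<le> a \<bullet> y - a \<bullet> v"
  proof
    fix a assume "a \<in> active 0 v"
    then obtain b where ab: "(a,b) \<in> ineqs" "a \<bullet> v = b" unfolding active_0 by blast
    then show "0 \<le> a \<bullet> y - a \<bullet> v" using ineqsD(2)[OF ab(1)] y by auto
  qed
  have "(\<Sum>a\<in>active 0 v. a \<bullet> y - a \<bullet> v) = (\<Sum>a\<in>active 0 v. a) \<bullet> y - (\<Sum>a\<in>active 0 v. a) \<bullet> v"
    by (simp only: inner_sum_left sum_subtractf)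
  then have "(\<Sum>a\<in>active 0 v. a \<bullet> y - a \<bullet> v) \<le> 0" using le by simp
  moreover have "(\<Sum>a\<in>active 0 v. a \<bullet> y - a \<bullet> v) \<ge> 0" using nn by (intro sum_nonneg) auto
  ultimately have "(\<Sum>a\<in>active 0 v. a \<bullet> y - a \<bullet> v) = 0" by linarith
  moreover have "(\<Sum>a\<in>active 0 v. a \<bullet> y - a \<bullet> v) = 0 \<longleftrightarrow> (\<forall>a\<in>active 0 v. a \<bullet> y - a \<bullet> v = 0)"
    by (rule sum_nonneg_eq_0_iff[OF finite_active]) (use nn in blast)
  ultimately have z: "\<forall>a\<in>active 0 v. a \<bullet> y - a \<bullet> v = 0" by blast
  have h: "a \<bullet> (y - v) = 0" if "(a,b) \<in> ineqs" "a \<bullet> v = b" for a b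
  proof -
    have "a \<in> active 0 v" unfolding active_0 using that by blast
    then show "a \<bullet> (y - v) = 0" using z by (simp add: inner_diff_right)
  qed
  have "y - v = 0" by (rule active_orthogonal_eq_0[OF v]) (use h in blast)
  then show ?thesis by simp
qed

lemma active_sum_in_vcone: "(\<Sum>a\<in>active 0 v. a) \<in> vcone v"
  unfolding vcone_iff
proof
  fix x assume x: "x \<in> P"
  have "\<forall>a\<in>active 0 v. a \<bullet> v \<le> a \<bullet> x"
  proof
    fix a assume "a \<in> active 0 v"
    then obtain b where ab: "(a,b) \<in> ineqs" "a \<bullet> v = b" unfolding active_0 by blast
    then show "a \<bullet> v \<le> a \<bullet> x" using ineqsD(2)[OF ab(1)] x by auto
  qed
  then show "(\<Sum>a\<in>active 0 v. a) \<bullet> v \<le> (\<Sum>a\<in>active 0 v. a) \<bullet> x"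
    by (simp add: inner_sum_left sum_mono)
qed

text \<open>The sum of the active normals at \<open>v\<close> is minimized on \<open>P\<close> only at \<open>v\<close>.\<close>
lemma vcone_max_cone: assumes v: "v \<in> verts" shows "vcone v \<in> max_cones (normal_fan P)"
  unfolding max_cones_def
proof (clarify, intro conjI ballI impI)
  show "vcone v \<in> normal_fan P" using vcone_in_normal_fan[OF v] .
  fix \<tau> assume "\<tau> \<in> normal_fan P" and sub: "vcone v \<subseteq> \<tau>"
  then obtain G where G: "G face_of P" "G \<noteq> {}" "\<tau> = normal_cone P G" unfolding normal_fan_def by blast
  have "G \<subseteq> {v}"
  proof
    fix y assume y: "y \<in> G"
    have yP: "y \<in> P" using y G(1) face_of_imp_subset by blast
    have "(\<Sum>a\<in>active 0 v. a) \<in> \<tau>" using active_sum_in_vcone sub by blast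
    then have "(\<Sum>a\<in>active 0 v. a) \<bullet> y \<le> (\<Sum>a\<in>active 0 v. a) \<bullet> v"
      using G(3) y vert_in_P[OF v] unfolding normal_cone_def by blast
    then show "y \<in> {v}" using active_sum_unique_minimizer[OF v yP] by simp
  qed
  then have "G = {v}" using G(2) by blast
  then show "\<tau> = vcone v" using G(3) unfolding vcone_def by simp
qed

lemma max_cone_eq_vcone:
  assumes s: "\<sigma> \<in> max_cones (normal_fan P)" shows "\<exists>v\<in>verts. \<sigma> = vcone v"
proof -
  have sf: "\<sigma> \<in> normal_fan P" and mx: "\<forall>\<tau>\<in>normal_fan P. \<sigma> \<subseteq> \<tau> \<longrightarrow> \<tau> = \<sigma>"
    using s unfolding max_cones_def by auto
  obtain G where G: "G face_of P" "G \<noteq> {}" "\<sigma> = normal_cone P G" using sf unfolding normal_fan_def by blast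
  have "compact G" using face_of_imp_compact[OF convex_P compact_P G(1)] .
  moreover have "convex G" using G(1) by (rule face_of_imp_convex)
  ultimately obtain v where v: "v extreme_point_of G" using extreme_point_exists_convex G(2) by blast
  have vV: "v \<in> verts" using v extreme_point_of_face[OF G(1)] unfolding verts_def by blast
  have vG: "v \<in> G" using v unfolding extreme_point_of_def by blast
  have "\<sigma> \<subseteq> vcone v" using G(3) vG unfolding vcone_def normal_cone_def by blast
  then have "vcone v = \<sigma>" using mx vcone_in_normal_fan[OF vV] by blast
  then show ?thesis using vV by blast
qed

lemma ineq_facet_rel_interior_exists:
  assumes ab: "(a,b) \<in> ineqs"
  obtains p where "p \<in> rel_interior {x\<in>P. a \<bullet> x = b}"
proof -
  have "convex {x\<in>P. a \<bullet> x = b}" using ineqsD(3)[OF ab] facet_of_imp_face_of face_of_imp_convex by blast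
  then show ?thesis using ineq_facet_nonempty[OF ab] rel_interior_eq_empty that by blast
qed

lemma vcone_facet_point_parallel:
  assumes ab: "(a,b) \<in> ineqs" and p: "p \<in> rel_interior {x\<in>P. a \<bullet> x = b}"
    and u: "u \<in> vcone v" and up: "u \<bullet> p = u \<bullet> v"
  obtains c where "c \<ge> 0" "u = c *\<^sub>R a"
proof -
  have "\<forall>x\<in>P. u \<bullet> p \<le> u \<bullet> x" using u up unfolding vcone_iff by simp
  then show ?thesis using facet_supporting_normal_parallel[OF ab p] that by blast
qed

lemma vcone_facet_point_ineq_eq:
  assumes ab: "(a,b) \<in> ineqs" and p: "p \<in> rel_interior {x\<in>P. a \<bullet> x = b}"
    and kb: "(k,b') \<in> ineqs" and k: "k \<in> vcone v" and kp: "k \<bullet> p = k \<bullet> v"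
  shows "k = a"
proof -
  obtain c where c: "c \<ge> 0" "k = c *\<^sub>R a" by (rule vcone_facet_point_parallel[OF ab p k kp])
  then have "c > 0" using ineq_normal_nonzero[OF kb] by fastforce
  then have "c = 1"
    using primitive_vec_pos_multiple_eq_1[OF ineqsD(1)[OF ab]] ineqsD(1)[OF kb] c(2) by simp
  then show ?thesis using c(2) by simp
qed

lemma active_normal_ray_gen:
  assumes v: "v \<in> verts" and ab: "(a,b) \<in> ineqs" and av: "a \<bullet> v = b"
  shows "a \<in> ray_gens (vcone v)"
  unfolding ray_gens_def
proof (intro CollectI conjI)
  show "primitive_vec a" using ineqsD(1)[OF ab] .
  obtain p where p: "p \<in> rel_interior {x\<in>P. a \<bullet> x = b}" by (rule ineq_facet_rel_interior_exists[OF ab])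
  have pP: "p \<in> P" and ap: "a \<bullet> p = b" using p rel_interior_subset by auto
  have inner_pv: "(p - v) \<bullet> u = u \<bullet> p - u \<bullet> v" for u
    by (simp only: inner_diff_left inner_commute[of p u] inner_commute[of v u])
  have "{c *\<^sub>R a |c. c \<ge> 0} = vcone v \<inter> {u. (p - v) \<bullet> u = 0}"
  proof
    show "{c *\<^sub>R a |c. c \<ge> 0} \<subseteq> vcone v \<inter> {u. (p - v) \<bullet> u = 0}"
    proof clarify
      fix c :: real assume c: "c \<ge> 0"
      have "c *\<^sub>R a \<in> vcone v"
        using ineqsD(2)[OF ab] av c unfolding vcone_iff by (auto intro: mult_left_mono)
      moreover have "(p - v) \<bullet> (c *\<^sub>R a) = 0" using ap av by (simp add: inner_pv)
      ultimately show "c *\<^sub>R a \<in> vcone v \<inter> {u. (p - v) \<bullet> u = 0}" by blast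
    qed
    show "vcone v \<inter> {u. (p - v) \<bullet> u = 0} \<subseteq> {c *\<^sub>R a |c. c \<ge> 0}"
    proof clarify
      fix u assume u: "u \<in> vcone v" "(p - v) \<bullet> u = 0"
      then have "u \<bullet> p = u \<bullet> v" by (simp add: inner_pv)
      then obtain c where "c \<ge> 0" "u = c *\<^sub>R a" by (rule vcone_facet_point_parallel[OF ab p u(1)])
      then show "\<exists>c. u = c *\<^sub>R a \<and> c \<ge> 0" by blast
    qed
  qed
  moreover have "(vcone v \<inter> {u. (p - v) \<bullet> u = 0}) face_of vcone v"
    using pP by (intro face_of_Int_supporting_hyperplane_ge[OF convex_vcone]) (auto simp: inner_pv vcone_iff)
  ultimately show "{c *\<^sub>R a |c. c \<ge> 0} face_of vcone v" by simp
qed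

text \<open>Active facet normals span extreme rays of the vertex cone: testing a combination against
  a relative interior point of the facet kills every other summand.\<close>
lemma active_normal_mem_combination:
  assumes ab: "(a,b) \<in> ineqs" and av: "a \<bullet> v = b" and finK: "finite K"
    and K: "\<And>k. k \<in> K \<Longrightarrow> k \<in> vcone v \<and> (\<exists>b'. (k,b') \<in> ineqs)"
    and l: "\<forall>k\<in>K. l k \<ge> 0" "a = (\<Sum>k\<in>K. l k *\<^sub>R k)"
  shows "a \<in> K"
proof (rule ccontr)
  assume naK: "a \<notin> K"
  obtain p where p: "p \<in> rel_interior {x\<in>P. a \<bullet> x = b}" by (rule ineq_facet_rel_interior_exists[OF ab])
  have pP: "p \<in> P" and ap: "a \<bullet> p = b" using p rel_interior_subset by auto
  define z where "z = p - v"
  have kz: "0 \<le> k \<bullet> z" if "k \<in> K" for k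
    using K[OF that] pP unfolding vcone_iff z_def by (auto simp: inner_diff_right)
  have "(\<Sum>k\<in>K. l k * (k \<bullet> z)) = a \<bullet> z" using l(2) by (simp add: inner_sum_left)
  also have "\<dots> = 0" unfolding z_def using ap av by (simp add: inner_diff_right)
  finally have zero: "\<forall>k\<in>K. l k * (k \<bullet> z) = 0"
    using sum_nonneg_eq_0_iff[OF finK, of "\<lambda>k. l k * (k \<bullet> z)"] l(1) kz by simp
  have "l k = 0" if k: "k \<in> K" for k
  proof (rule ccontr)
    assume "l k \<noteq> 0"
    then have "k \<bullet> p = k \<bullet> v" using zero k unfolding z_def by (auto simp: inner_diff_right)
    moreover obtain b' where "(k,b') \<in> ineqs" "k \<in> vcone v" using K[OF k] by blast
    ultimately have "k = a" using vcone_facet_point_ineq_eq[OF ab p] by blast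
    then show False using naK k by simp
  qed
  then have "a = 0" using l(2) by simp
  then show False using ineq_normal_nonzero[OF ab] by simp
qed

lemma QGor_vcone_unique:
  assumes v: "v \<in> verts" and q1: "QGor_cone (vcone v) r1" and q2: "QGor_cone (vcone v) r2"
  shows "r1 = r2"
proof -
  obtain u1 where u1: "primitive_vec u1" "\<forall>w\<in>ray_gens (vcone v). w \<bullet> u1 = real r1" and r1: "r1 > 0"
    using q1 unfolding QGor_cone_def by blast
  obtain u2 where u2: "primitive_vec u2" "\<forall>w\<in>ray_gens (vcone v). w \<bullet> u2 = real r2" and r2: "r2 > 0"
    using q2 unfolding QGor_cone_def by blast
  have h: "a \<bullet> (real r2 *\<^sub>R u1 - real r1 *\<^sub>R u2) = 0" if "(a,b) \<in> ineqs" "a \<bullet> v = b" for a b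
  proof -
    have "a \<in> ray_gens (vcone v)" by (rule active_normal_ray_gen[OF v that])
    then show ?thesis using u1(2) u2(2) by (simp add: inner_diff_right)
  qed
  have "real r2 *\<^sub>R u1 - real r1 *\<^sub>R u2 = 0" by (rule active_orthogonal_eq_0[OF v]) (use h in blast)
  then have eq: "real r1 *\<^sub>R u2 = real r2 *\<^sub>R u1" by simp
  have "u2 = (1 / real r1) *\<^sub>R (real r1 *\<^sub>R u2)" using r1 by simp
  also have "\<dots> = (1 / real r1) *\<^sub>R (real r2 *\<^sub>R u1)" using eq by simp
  also have "\<dots> = (real r2 / real r1) *\<^sub>R u1" by simp
  finally have u2e: "u2 = (real r2 / real r1) *\<^sub>R u1" .
  have pos: "real r2 / real r1 > 0" using r1 r2 by simp
  have pr: "primitive_vec ((real r2 / real r1) *\<^sub>R u1)" using u2(1) u2e by simp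
  have "real r2 / real r1 = 1" by (rule primitive_vec_pos_multiple_eq_1[OF u1(1) pr pos])
  then have "real r2 = real r1" using r1 by (simp add: divide_eq_1_iff)
  then show ?thesis by simp
qed

lemma finite_max_cones: "finite (max_cones (normal_fan P))"
proof -
  have "normal_fan P \<subseteq> (\<lambda>F. normal_cone P F) ` {F. F face_of P}" unfolding normal_fan_def by blast
  moreover have "finite {F. F face_of P}" by (rule finite_polyhedron_faces[OF polyhedron_P])
  ultimately show ?thesis unfolding max_cones_def using finite_subset by fastforce
qed

lemma QGor_cone_gor_index:
  assumes "QGor_fan (normal_fan P) r" and \<sigma>: "\<sigma> \<in> max_cones (normal_fan P)"
  shows "QGor_cone \<sigma> (gor_index \<sigma>)"
proof -
  obtain v where v: "v \<in> verts" "\<sigma> = vcone v" using max_cone_eq_vcone[OF \<sigma>] by blast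
  obtain r\<sigma> where r\<sigma>: "QGor_cone \<sigma> r\<sigma>" using assms unfolding QGor_fan_def by blast
  have "gor_index \<sigma> = r\<sigma>" unfolding gor_index_def
    using r\<sigma> QGor_vcone_unique[OF v(1)] v(2) by (intro the_equality) auto
  then show ?thesis using r\<sigma> by simp
qed

lemma QGor_fan_index_pos:
  assumes Q: "QGor_fan (normal_fan P) r"
  shows "r > 0"
proof -
  have "0 \<notin> gor_index ` max_cones (normal_fan P)"
    using QGor_cone_gor_index[OF Q] unfolding QGor_cone_def by fastforce
  then have "Lcm (gor_index ` max_cones (normal_fan P)) \<noteq> 0"
    using finite_max_cones by (simp add: Lcm_0_iff)
  then show ?thesis using Q unfolding QGor_fan_def by simp
qed

lemma QGor_vertex_directions:
  assumes Q: "QGor_fan (normal_fan P) r"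
  obtains w where "\<And>v a b. v \<in> verts \<Longrightarrow> (a,b) \<in> ineqs \<Longrightarrow> a \<bullet> v = b \<Longrightarrow> a \<bullet> w v = 1"
    and "\<And>v. v \<in> verts \<Longrightarrow> int_vec (real r *\<^sub>R w v)"
proof -
  have "\<exists>w. (\<forall>(a,b)\<in>ineqs. a \<bullet> v = b \<longrightarrow> a \<bullet> w = 1) \<and> int_vec (real r *\<^sub>R w)" if v: "v \<in> verts" for v
  proof -
    have max: "vcone v \<in> max_cones (normal_fan P)" by (rule vcone_max_cone[OF v])
    define rv where "rv = gor_index (vcone v)"
    obtain u where u: "primitive_vec u" "\<forall>w\<in>ray_gens (vcone v). w \<bullet> u = real rv" and rv: "rv > 0"
      using QGor_cone_gor_index[OF Q max] unfolding QGor_cone_def rv_def by blast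
    have "rv dvd r" using Q max unfolding QGor_fan_def rv_def by (simp add: dvd_Lcm)
    then obtain q where q: "r = rv * q" by (rule dvdE)
    define w where "w = (1 / real rv) *\<^sub>R u"
    have "a \<bullet> w = 1" if "(a,b) \<in> ineqs" "a \<bullet> v = b" for a b
      using active_normal_ray_gen[OF v that] u(2) rv unfolding w_def by simp
    then have "\<forall>(a,b)\<in>ineqs. a \<bullet> v = b \<longrightarrow> a \<bullet> w = 1" by blast
    moreover have "real r *\<^sub>R w = real q *\<^sub>R u" unfolding w_def q using rv by simp
    then have "int_vec (real r *\<^sub>R w)"
      using u(1) unfolding primitive_vec_def by (simp add: int_vec_scaleR_of_nat)
    ultimately show ?thesis by blast
  qed
  then obtain w where w: "\<forall>v\<in>verts. (\<forall>(a,b)\<in>ineqs. a \<bullet> v = b \<longrightarrow> a \<bullet> w v = 1) \<and> int_vec (real r *\<^sub>R w v)"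
    using bchoice[of verts "\<lambda>v w. (\<forall>(a,b)\<in>ineqs. a \<bullet> v = b \<longrightarrow> a \<bullet> w = 1) \<and> int_vec (real r *\<^sub>R w)"]
    by blast
  show ?thesis
  proof (rule that)
    fix v a b assume "v \<in> verts" "(a,b) \<in> ineqs" "a \<bullet> v = b"
    then show "a \<bullet> w v = 1" using w by fast
  next
    fix v assume "v \<in> verts"
    then show "int_vec (real r *\<^sub>R w v)" using w by blast
  qed
qed

section \<open>Inner parallel bodies\<close>

definition "shrink t = {x. \<forall>(a,b)\<in>ineqs. b + t \<le> a \<bullet> x}"

lemma shrink_0: "shrink 0 = P" unfolding shrink_def using P_eq_ineqs by simp

lemma shrink_minimizer_active_combination:
  assumes y: "y \<in> shrink t" and min: "\<forall>x\<in>shrink t. u \<bullet> y \<le> u \<bullet> x"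
  shows "\<exists>l. (\<forall>c\<in>active t y. l c \<ge> 0) \<and> u = (\<Sum>c\<in>active t y. l c *\<^sub>R c)"
proof -
  define A where "A = (\<lambda>(a,b). (a, b + t)) ` ineqs"
  have finA: "finite A" unfolding A_def using finite_ineqs by simp
  have eqs: "(\<forall>(c,d)\<in>A. d \<le> c \<bullet> x) \<longleftrightarrow> x \<in> shrink t" for x unfolding A_def shrink_def by auto
  have KK: "{c. \<exists>d. (c,d)\<in>A \<and> c \<bullet> y = d} = active t y" unfolding A_def active_def by auto
  have h1: "\<forall>(c,d)\<in>A. d \<le> c \<bullet> y" using eqs y by blast
  have h2: "u \<bullet> y \<le> u \<bullet> x" if "\<forall>(c,d)\<in>A. d \<le> c \<bullet> x" for x using eqs min that by blast
  obtain l where "\<forall>c\<in>{c. \<exists>d. (c,d)\<in>A \<and> c \<bullet> y = d}. l c \<ge> 0"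
      "u = (\<Sum>c\<in>{c. \<exists>d. (c,d)\<in>A \<and> c \<bullet> y = d}. l c *\<^sub>R c)"
    by (rule farkas_active_normals[OF finA h1 h2])
  then show ?thesis unfolding KK by blast
qed

lemma vcone_active_combination:
  assumes v: "v \<in> verts" and u: "u \<in> vcone v"
  shows "\<exists>l. (\<forall>c\<in>active 0 v. l c \<ge> 0) \<and> u = (\<Sum>c\<in>active 0 v. l c *\<^sub>R c)"
proof (rule shrink_minimizer_active_combination)
  show "v \<in> shrink 0" using vert_in_P[OF v] shrink_0 by simp
  show "\<forall>x\<in>shrink 0. u \<bullet> v \<le> u \<bullet> x" using u shrink_0 unfolding vcone_iff by simp
qed

lemma shrink_eq_Inter: "shrink t = (\<Inter>p\<in>ineqs. {x. fst p \<bullet> x \<ge> snd p + t})"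
  unfolding shrink_def by fastforce

lemma convex_shrink: "convex (shrink t)"
  unfolding shrink_eq_Inter by (intro convex_INT) (simp add: convex_halfspace_ge)

lemma closed_shrink: "closed (shrink t)"
  unfolding shrink_eq_Inter by (intro closed_INT) (simp add: closed_halfspace_ge)

lemma shrink_subset: "t \<ge> 0 \<Longrightarrow> shrink t \<subseteq> P"
  unfolding shrink_def using P_eq_ineqs by force

lemma compact_shrink: "t \<ge> 0 \<Longrightarrow> compact (shrink t)"
  using shrink_subset compact_P closed_shrink compact_eq_bounded_closed bounded_subset by metis

lemma inner_par_eq_shrink: "inner_par P t = shrink t"
  unfolding shrink_def set_eq_iff mem_inner_par_iff[OF finite_ineqs ineqs_nonempty]
  by (auto simp: le_diff_eq add.commute)

lemma inner_par_scaleR_image: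
  assumes c: "c > 0"
  shows "inner_par ((\<lambda>x. c *\<^sub>R x) ` P) r = (\<lambda>x. c *\<^sub>R x) ` shrink (r / c)"
proof -
  let ?f = "\<lambda>x::real^'n. c *\<^sub>R x"
  have FIs: "facet_ineqs (?f ` P) = (\<lambda>(a,b). (a, c * b)) ` ineqs" by (rule facet_ineqs_scaleR_image[OF c])
  have "finite (facet_ineqs (?f ` P))" "facet_ineqs (?f ` P) \<noteq> {}"
    unfolding FIs using finite_ineqs ineqs_nonempty by auto
  then have par: "x \<in> inner_par (?f ` P) r \<longleftrightarrow> (\<forall>(a,b)\<in>ineqs. r \<le> a \<bullet> x - c * b)" for x
    by (simp add: mem_inner_par_iff FIs case_prod_beta)
  have scaled: "r \<le> a \<bullet> x - c * b \<longleftrightarrow> b + r / c \<le> (a \<bullet> x) / c" for a b x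
  proof -
    have "b + r / c \<le> (a \<bullet> x) / c \<longleftrightarrow> (b + r / c) * c \<le> a \<bullet> x" using c by (rule pos_le_divide_eq)
    also have "\<dots> \<longleftrightarrow> r \<le> a \<bullet> x - c * b" using c by (simp add: algebra_simps)
    finally show ?thesis by simp
  qed
  have mem: "x \<in> inner_par (?f ` P) r \<longleftrightarrow> (1/c) *\<^sub>R x \<in> shrink (r / c)" for x
  proof -
    have "(1/c) *\<^sub>R x \<in> shrink (r / c) \<longleftrightarrow> (\<forall>(a,b)\<in>ineqs. b + r / c \<le> (a \<bullet> x) / c)"
      unfolding shrink_def by simp
    then show ?thesis unfolding par by (simp only: scaled)
  qed
  show ?thesis
  proof
    show "inner_par (?f ` P) r \<subseteq> ?f ` shrink (r / c)"
    proof
      fix x assume "x \<in> inner_par (?f ` P) r"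
      then have "(1/c) *\<^sub>R x \<in> shrink (r / c)" using mem by simp
      moreover have "x = c *\<^sub>R ((1/c) *\<^sub>R x)" using c by simp
      ultimately show "x \<in> ?f ` shrink (r / c)" by (rule rev_image_eqI)
    qed
    show "?f ` shrink (r / c) \<subseteq> inner_par (?f ` P) r"
    proof
      fix x assume "x \<in> ?f ` shrink (r / c)"
      then obtain y where "y \<in> shrink (r / c)" "x = c *\<^sub>R y" by blast
      then show "x \<in> inner_par (?f ` P) r" using mem[of x] c by simp
    qed
  qed
qed

lemma scaleR_mem_interior_scaleR_image:
  assumes k: "k > 0" and x: "\<forall>(a,b)\<in>ineqs. b < a \<bullet> x"
  shows "k *\<^sub>R x \<in> interior ((\<lambda>y. k *\<^sub>R y) ` P)"
proof -
  define U where "U = (\<Inter>p\<in>ineqs. {y. k * snd p < fst p \<bullet> y})"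
  have "open U" unfolding U_def using finite_ineqs by (intro open_INT) (auto simp: open_halfspace_gt)
  moreover have "U \<subseteq> (\<lambda>y. k *\<^sub>R y) ` P"
  proof
    fix y assume y: "y \<in> U"
    have "b \<le> a \<bullet> ((1 / k) *\<^sub>R y)" if "(a,b) \<in> ineqs" for a b
    proof -
      have "k * b < a \<bullet> y" using y that unfolding U_def by force
      then have "b < (a \<bullet> y) / k" using k by (simp add: pos_less_divide_eq mult.commute)
      then show ?thesis by simp
    qed
    then have "(1 / k) *\<^sub>R y \<in> P" using P_eq_ineqs by blast
    moreover have "y = k *\<^sub>R ((1 / k) *\<^sub>R y)" using k by simp
    ultimately show "y \<in> (\<lambda>y. k *\<^sub>R y) ` P" by (rule rev_image_eqI)
  qed
  moreover have "k *\<^sub>R x \<in> U" unfolding U_def using x k by auto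
  ultimately show ?thesis using interior_maximal by blast
qed

end

section \<open>Vertices of inner parallel bodies with the normal fan of \<open>P\<close>\<close>

text \<open>\<open>w v\<close> stands for \<open>u\<^sub>\<sigma> / r\<^sub>\<sigma>\<close>, and \<open>moved t v\<close> is the vertex of \<open>P^(t)\<close> that
  corresponds to \<open>v\<close> while the normal fan is unchanged.\<close>
locale vertex_directions = full_dim_lattice_polytope P for P :: "(real^'n) set" +
  fixes w :: "real^'n \<Rightarrow> real^'n"
  assumes active_direction: "\<And>v a b. v \<in> verts \<Longrightarrow> (a,b) \<in> ineqs \<Longrightarrow> a \<bullet> v = b \<Longrightarrow> a \<bullet> w v = 1"
begin

definition "moved t v = v + t *\<^sub>R w v"

lemma moved_active: "v \<in> verts \<Longrightarrow> (a,b) \<in> ineqs \<Longrightarrow> a \<bullet> v = b \<Longrightarrow> a \<bullet> moved t v = b + t"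
  unfolding moved_def using active_direction by (simp add: inner_add_right)

lemma active_normal_moved_le:
  assumes v: "v \<in> verts" and c: "c \<in> active 0 v" and y: "y \<in> shrink t"
  shows "c \<bullet> moved t v \<le> c \<bullet> y"
proof -
  obtain b where cb: "(c,b) \<in> ineqs" "c \<bullet> v = b" using c unfolding active_0 by blast
  then have "c \<bullet> moved t v = b + t" by (rule moved_active[OF v])
  moreover have "b + t \<le> c \<bullet> y" using y cb(1) unfolding shrink_def by blast
  ultimately show ?thesis by simp
qed

lemma vcone_subset_normal_cone_moved:
  assumes v: "v \<in> verts" shows "vcone v \<subseteq> normal_cone (shrink t) {moved t v}"
proof
  fix u assume u: "u \<in> vcone v"
  obtain l where l: "\<forall>c\<in>active 0 v. l c \<ge> 0" "u = (\<Sum>c\<in>active 0 v. l c *\<^sub>R c)" using vcone_active_combination[OF v u] by blast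
  have "u \<bullet> moved t v \<le> u \<bullet> y" if y: "y \<in> shrink t" for y
    by (rule nonneg_combination_inner_le[OF finite_active l]) (use active_normal_moved_le[OF v _ y] in blast)
  then show "u \<in> normal_cone (shrink t) {moved t v}" unfolding normal_cone_def by blast
qed

lemma shrink_eq_convex_hull_moved:
  assumes H: "\<forall>v\<in>verts. moved t v \<in> shrink t"
  shows "shrink t = convex hull (moved t ` verts)"
proof
  show "convex hull (moved t ` verts) \<subseteq> shrink t" using H convex_shrink by (intro hull_minimal) auto
  show "shrink t \<subseteq> convex hull (moved t ` verts)"
  proof
    fix y assume y: "y \<in> shrink t"
    show "y \<in> convex hull (moved t ` verts)"
    proof (rule ccontr)
      assume yn: "y \<notin> convex hull (moved t ` verts)"
      have cl: "closed (convex hull (moved t ` verts))"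
        using finite_verts by (intro compact_imp_closed finite_imp_compact_convex_hull) simp
      obtain z \<beta> where z: "z \<bullet> y < \<beta>" "\<forall>k\<in>convex hull (moved t ` verts). z \<bullet> k > \<beta>"
        using separating_hyperplane_closed_point[OF convex_convex_hull cl yn] by blast
      have "continuous_on verts (\<lambda>x. z \<bullet> x)" by (intro continuous_intros)
      then obtain v where v: "v \<in> verts" "\<forall>v'\<in>verts. z \<bullet> v \<le> z \<bullet> v'"
        using continuous_attains_inf[OF finite_imp_compact[OF finite_verts] verts_nonempty] by blast
      have "verts \<subseteq> {x. z \<bullet> x \<ge> z \<bullet> v}" using v by auto
      then have "convex hull verts \<subseteq> {x. z \<bullet> x \<ge> z \<bullet> v}" by (rule hull_minimal) (rule convex_halfspace_ge)
      then have "z \<in> vcone v" unfolding vcone_iff using P_eq_convex_hull_verts by auto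
      then have "z \<in> normal_cone (shrink t) {moved t v}" using vcone_subset_normal_cone_moved[OF v(1)] by blast
      then have "z \<bullet> moved t v \<le> z \<bullet> y" using y unfolding normal_cone_def by blast
      moreover have "moved t v \<in> convex hull (moved t ` verts)" using v(1) by (intro hull_inc) simp
      then have "z \<bullet> moved t v > \<beta>" using z(2) by blast
      ultimately show False using z(1) by simp
    qed
  qed
qed

lemma extreme_points_shrink:
  assumes H: "\<forall>v\<in>verts. moved t v \<in> shrink t"
  shows "{y. y extreme_point_of shrink t} = moved t ` verts"
proof
  show "{y. y extreme_point_of shrink t} \<subseteq> moved t ` verts"
    using shrink_eq_convex_hull_moved[OF H] extreme_point_of_convex_hull by fastforce
  show "moved t ` verts \<subseteq> {y. y extreme_point_of shrink t}"
  proof clarify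
    fix v assume v: "v \<in> verts"
    show "moved t v extreme_point_of shrink t"
      unfolding extreme_point_of_def
    proof (intro conjI ballI)
      show "moved t v \<in> shrink t" using H v by blast
      fix y1 y2 assume y1: "y1 \<in> shrink t" and y2: "y2 \<in> shrink t"
      show "moved t v \<notin> open_segment y1 y2"
      proof
        assume "moved t v \<in> open_segment y1 y2"
        then obtain \<mu> where ne: "y1 \<noteq> y2" and mu: "0 < \<mu>" "\<mu> < 1" "moved t v = (1 - \<mu>) *\<^sub>R y1 + \<mu> *\<^sub>R y2"
          unfolding in_segment by blast
        have h: "a \<bullet> (y1 - y2) = 0" if ab: "(a,b) \<in> ineqs" "a \<bullet> v = b" for a b
        proof -
          have e: "a \<bullet> moved t v = b + t" by (rule moved_active[OF v ab])
          have A: "a \<bullet> y1 - (b + t) \<ge> 0" "a \<bullet> y2 - (b + t) \<ge> 0" using y1 y2 ab(1) unfolding shrink_def by auto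
          have "(1 - \<mu>) * (a \<bullet> y1) + \<mu> * (a \<bullet> y2) = b + t" using e mu(3) by (simp add: inner_add_right)
          then have s: "(1 - \<mu>) * (a \<bullet> y1 - (b + t)) + \<mu> * (a \<bullet> y2 - (b + t)) = 0" by (simp add: algebra_simps)
          have p1: "(1 - \<mu>) * (a \<bullet> y1 - (b + t)) \<ge> 0" using A mu by simp
          have p2: "\<mu> * (a \<bullet> y2 - (b + t)) \<ge> 0" using A mu by simp
          have "(1 - \<mu>) * (a \<bullet> y1 - (b + t)) = 0" using s p1 p2 by linarith
          then have "a \<bullet> y1 = b + t" using mu by simp
          moreover have "\<mu> * (a \<bullet> y2 - (b + t)) = 0" using s p1 p2 by linarith
          then have "a \<bullet> y2 = b + t" using mu by simp
          ultimately show ?thesis by (simp add: inner_diff_right)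
        qed
        have "y1 - y2 = 0" by (rule active_orthogonal_eq_0[OF v]) (use h in blast)
        then show False using ne by simp
      qed
    qed
  qed
qed

lemma moved_step_toward_P_in_shrink:
  assumes v: "v \<in> verts" and x: "x \<in> P"
    and strict: "\<And>a b. (a,b) \<in> ineqs \<Longrightarrow> a \<bullet> v \<noteq> b \<Longrightarrow> b + t < a \<bullet> moved t v"
  obtains e where "e > 0" "moved t v + e *\<^sub>R (x - v) \<in> shrink t"
proof -
  define I where "I = {(a,b)\<in>ineqs. a \<bullet> v \<noteq> b}"
  have "finite I" using finite_ineqs unfolding I_def by (auto intro: finite_subset)
  moreover have "fst i \<bullet> moved t v - (snd i + t) > 0" if iI: "i \<in> I" for i
  proof -
    obtain a b where "i = (a,b)" "(a,b) \<in> ineqs" "a \<bullet> v \<noteq> b" using iI unfolding I_def by auto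
    then show ?thesis using strict by simp
  qed
  ultimately obtain e where e: "e > 0"
    "\<And>i. i \<in> I \<Longrightarrow> e * (- (fst i \<bullet> (x - v))) < fst i \<bullet> moved t v - (snd i + t)"
    using finite_ex_pos_mult_less[of I "\<lambda>i. fst i \<bullet> moved t v - (snd i + t)" "\<lambda>i. - (fst i \<bullet> (x - v))"]
    by blast
  have "b + t \<le> a \<bullet> (moved t v + e *\<^sub>R (x - v))" if ab: "(a,b) \<in> ineqs" for a b
  proof (cases "a \<bullet> v = b")
    case True
    have "a \<bullet> moved t v = b + t" by (rule moved_active[OF v ab True])
    moreover have "a \<bullet> (x - v) \<ge> 0" using ineqsD(2)[OF ab] x True by (auto simp: inner_diff_right)
    ultimately show ?thesis using e(1) by (simp add: inner_add_right)
  next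
    case False
    then show ?thesis using ab e(2)[of "(a,b)"] unfolding I_def by (simp add: inner_add_right)
  qed
  then show ?thesis using e(1) that unfolding shrink_def by blast
qed

lemma normal_cone_moved_eq_vcone:
  assumes v: "v \<in> verts"
    and strict: "\<And>a b. (a,b) \<in> ineqs \<Longrightarrow> a \<bullet> v \<noteq> b \<Longrightarrow> b + t < a \<bullet> moved t v"
  shows "normal_cone (shrink t) {moved t v} = vcone v"
proof
  show "vcone v \<subseteq> normal_cone (shrink t) {moved t v}" by (rule vcone_subset_normal_cone_moved[OF v])
  show "normal_cone (shrink t) {moved t v} \<subseteq> vcone v"
  proof
    fix u assume u: "u \<in> normal_cone (shrink t) {moved t v}"
    show "u \<in> vcone v" unfolding vcone_iff
    proof
      fix x assume x: "x \<in> P"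
      obtain e where e: "e > 0" "moved t v + e *\<^sub>R (x - v) \<in> shrink t"
        using moved_step_toward_P_in_shrink[OF v x strict] by blast
      then have "u \<bullet> moved t v \<le> u \<bullet> (moved t v + e *\<^sub>R (x - v))" using u unfolding normal_cone_def by blast
      then have "0 \<le> e * (u \<bullet> (x - v))" by (simp add: inner_add_right)
      then show "u \<bullet> v \<le> u \<bullet> x" using e(1) by (simp add: zero_le_mult_iff inner_diff_right)
    qed
  qed
qed

lemma moved_in_shrink:
  assumes v: "v \<in> verts"
    and strict: "\<And>a b. (a,b) \<in> ineqs \<Longrightarrow> a \<bullet> v \<noteq> b \<Longrightarrow> b + t < a \<bullet> moved t v"
  shows "moved t v \<in> shrink t"
proof -
  have "b + t \<le> a \<bullet> moved t v" if ab: "(a,b) \<in> ineqs" for a b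
    using moved_active[OF v ab] strict[OF ab] by (cases "a \<bullet> v = b") auto
  then show ?thesis unfolding shrink_def by blast
qed

lemma small_shift_strict:
  obtains t where "t > 0"
    "\<And>v a b. v \<in> verts \<Longrightarrow> (a,b) \<in> ineqs \<Longrightarrow> a \<bullet> v \<noteq> b \<Longrightarrow> b + t < a \<bullet> moved t v"
proof -
  define I where "I = {(v,(a,b)). v \<in> verts \<and> (a,b) \<in> ineqs \<and> a \<bullet> v \<noteq> b}"
  have "I \<subseteq> verts \<times> ineqs" unfolding I_def by auto
  then have "finite I" using finite_verts finite_ineqs finite_subset by blast
  moreover have "fst (snd i) \<bullet> fst i - snd (snd i) > 0" if iI: "i \<in> I" for i
  proof -
    obtain v a b where i: "i = (v,(a,b))" "v \<in> verts" "(a,b) \<in> ineqs" "a \<bullet> v \<noteq> b"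
      using iI unfolding I_def by auto
    moreover have "b \<le> a \<bullet> v" using ineqsD(2)[OF i(3)] vert_in_P[OF i(2)] by blast
    ultimately show ?thesis by simp
  qed
  ultimately obtain e where e: "e > 0"
    "\<And>i. i \<in> I \<Longrightarrow> e * (1 - fst (snd i) \<bullet> w (fst i)) < fst (snd i) \<bullet> fst i - snd (snd i)"
    using finite_ex_pos_mult_less[of I "\<lambda>i. fst (snd i) \<bullet> fst i - snd (snd i)" "\<lambda>i. 1 - fst (snd i) \<bullet> w (fst i)"]
    by blast
  have "b + e < a \<bullet> moved e v" if "v \<in> verts" "(a,b) \<in> ineqs" "a \<bullet> v \<noteq> b" for v a b
    using e(2)[of "(v,(a,b))"] that unfolding I_def moved_def by (simp add: inner_add_right algebra_simps)
  then show ?thesis using e(1) that by blast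
qed

lemma normal_fan_shrink_small: "\<exists>t>0. normal_fan (shrink t) = normal_fan P"
proof -
  obtain t where t: "t > 0"
    and strict: "\<And>v a b. v \<in> verts \<Longrightarrow> (a,b) \<in> ineqs \<Longrightarrow> a \<bullet> v \<noteq> b \<Longrightarrow> b + t < a \<bullet> moved t v"
    by (rule small_shift_strict) blast
  have H: "\<forall>v\<in>verts. moved t v \<in> shrink t" using moved_in_shrink strict by blast
  have "normal_fan (shrink t) = normal_fan P"
  proof (rule normal_fan_eq_if_vertex_cones_eq[OF compact_P convex_P compact_shrink convex_shrink])
    show "0 \<le> t" using t by simp
    show "{y. y extreme_point_of shrink t} = moved t ` {y. y extreme_point_of P}"
      using extreme_points_shrink[OF H] unfolding verts_def by simp
    fix y assume "y extreme_point_of P"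
    then have y: "y \<in> verts" unfolding verts_def by simp
    show "normal_cone (shrink t) {moved t y} = normal_cone P {y}"
      using normal_cone_moved_eq_vcone[OF y strict[OF y]] unfolding vcone_def .
  qed
  then show ?thesis using t by blast
qed

lemma eq_moved_if_normal_cone_eq_vcone:
  assumes v: "v \<in> verts" and y: "y \<in> shrink t" and Ny: "normal_cone (shrink t) {y} = vcone v"
  shows "y = moved t v"
proof -
  have "a \<bullet> y = b + t" if ab: "(a,b) \<in> ineqs" and av: "a \<bullet> v = b" for a b
  proof -
    have "a \<in> vcone v" by (rule active_normal_in_vcone[OF ab av])
    then have "\<forall>x\<in>shrink t. a \<bullet> y \<le> a \<bullet> x" using Ny unfolding normal_cone_def by blast
    then obtain l where l: "\<forall>c\<in>active t y. l c \<ge> 0" "a = (\<Sum>c\<in>active t y. l c *\<^sub>R c)"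
      using shrink_minimizer_active_combination[OF y] by blast
    have "k \<in> vcone v \<and> (\<exists>b'. (k,b') \<in> ineqs)" if k: "k \<in> active t y" for k
    proof -
      obtain bk where bk: "(k,bk) \<in> ineqs" "k \<bullet> y = bk + t" using k unfolding active_def by blast
      then have "k \<in> normal_cone (shrink t) {y}" unfolding normal_cone_def shrink_def by auto
      then show ?thesis using Ny bk(1) by auto
    qed
    then have "a \<in> active t y" using active_normal_mem_combination[OF ab av finite_active _ l] by blast
    then obtain b' where b': "(a,b') \<in> ineqs" "a \<bullet> y = b' + t" unfolding active_def by blast
    then show ?thesis using ineq_offset_unique[OF ab b'(1)] by simp
  qed
  then have "a \<bullet> (y - moved t v) = 0" if "(a,b) \<in> ineqs" "a \<bullet> v = b" for a b
    using moved_active[OF v that] that by (simp add: inner_diff_right)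
  then have "y - moved t v = 0" using active_orthogonal_eq_0[OF v] by blast
  then show ?thesis by simp
qed

text \<open>If \<open>P^(t)\<close> has the normal fan of \<open>P\<close>, the vertex cone of \<open>v\<close> is the normal cone of a vertex
  of \<open>P^(t)\<close>, and that vertex can only be the moved vertex.\<close>
lemma moved_in_shrink_if_fan_eq:
  assumes t0: "t0 > 0" and fan: "normal_fan (shrink t0) = normal_fan P" and v: "v \<in> verts"
  shows "moved t0 v \<in> shrink t0"
proof -
  let ?Q = "shrink t0"
  have cQ: "compact ?Q" using compact_shrink t0 by simp
  have vQ: "convex ?Q" by (rule convex_shrink)
  have "vcone v \<in> normal_fan ?Q" using vcone_in_normal_fan[OF v] fan by simp
  then obtain F where F: "F face_of ?Q" "F \<noteq> {}" "vcone v = normal_cone ?Q F" unfolding normal_fan_def by blast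
  have cF: "compact F" by (rule face_of_imp_compact[OF vQ cQ F(1)])
  have vF: "convex F" using F(1) by (rule face_of_imp_convex)
  obtain y where yF: "y extreme_point_of F" using extreme_point_exists_convex[OF cF vF F(2)] by blast
  have yQe: "y extreme_point_of ?Q" and yinF: "y \<in> F" using yF extreme_point_of_face[OF F(1)] by auto
  have yQ: "y \<in> ?Q" using yinF F(1) face_of_imp_subset by blast
  have "{y} face_of ?Q" using yQe face_of_singleton by blast
  then have "normal_cone ?Q {y} \<in> normal_fan P" using fan unfolding normal_fan_def by blast
  moreover have "vcone v \<subseteq> normal_cone ?Q {y}" using F(3) yinF unfolding normal_cone_def by blast
  ultimately have "normal_cone ?Q {y} = vcone v" using vcone_max_cone[OF v] unfolding max_cones_def by blast
  then show ?thesis using eq_moved_if_normal_cone_eq_vcone[OF v yQ] yQ by simp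
qed

definition "fan_stable = {s. s > 0 \<and> normal_fan (inner_par P s) = normal_fan P}"

lemma fan_stable_eq: "fan_stable = {s. s > 0 \<and> normal_fan (shrink s) = normal_fan P}"
  unfolding fan_stable_def inner_par_eq_shrink ..

lemma fan_stable_nonempty: "fan_stable \<noteq> {}" using normal_fan_shrink_small unfolding fan_stable_eq by blast

lemma bdd_above_fan_stable: "bdd_above fan_stable"
proof -
  obtain R where R: "\<forall>x\<in>P. norm x \<le> R" using compact_P compact_imp_bounded bounded_iff by metis
  obtain a0 b0 where ab0: "(a0,b0) \<in> ineqs" using ineqs_nonempty by auto
  have "s \<le> norm a0 * R - b0" if s: "s \<in> fan_stable" for s
  proof -
    have s0: "s > 0" and fan: "normal_fan (shrink s) = normal_fan P" using s unfolding fan_stable_eq by auto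
    obtain v where v: "v \<in> verts" using verts_nonempty by blast
    have "vcone v \<in> normal_fan (shrink s)" using vcone_in_normal_fan[OF v] fan by simp
    then obtain F where "F face_of shrink s" "F \<noteq> {}" unfolding normal_fan_def by blast
    then obtain y where y: "y \<in> shrink s" using face_of_imp_subset by blast
    have "shrink s \<subseteq> P" using s0 by (intro shrink_subset) simp
    then have yP: "y \<in> P" using y by blast
    have "b0 + s \<le> a0 \<bullet> y" using y ab0 unfolding shrink_def by auto
    also have "\<dots> \<le> norm a0 * norm y" by (rule norm_cauchy_schwarz)
    also have "\<dots> \<le> norm a0 * R" using R yP by (intro mult_left_mono) auto
    finally show ?thesis by simp
  qed
  then show ?thesis unfolding bdd_above_def by blast
qed

lemma Sup_fan_stable_pos: "Sup fan_stable > 0"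
proof -
  obtain s where s: "s \<in> fan_stable" using fan_stable_nonempty by blast
  then have "s \<le> Sup fan_stable" using bdd_above_fan_stable by (intro cSup_upper)
  moreover have "s > 0" using s unfolding fan_stable_def by simp
  ultimately show ?thesis by simp
qed

lemma nef_value_eq: "nef_value P = inverse (Sup fan_stable)"
  unfolding nef_value_def fan_stable_def ..

text \<open>\<open>\<langle>a, moved t v\<rangle> - (b + t)\<close> is affine in \<open>t\<close> and positive at \<open>t = 0\<close> for an inactive
  facet; if it were negative at \<open>t\<close>, it would also be negative at a fan-preserving \<open>t\<^sub>0\<close> close
  to the supremum.\<close>
lemma moved_in_shrink_below_Sup:
  assumes t: "0 < t" "t \<le> Sup fan_stable" and v: "v \<in> verts"
  shows "moved t v \<in> shrink t"
proof (rule ccontr)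
  assume nin: "moved t v \<notin> shrink t"
  then obtain a b where ab: "(a,b) \<in> ineqs" and lt: "a \<bullet> moved t v < b + t" unfolding shrink_def by auto
  have na: "a \<bullet> v \<noteq> b" using moved_active[OF v ab] lt by auto
  have g: "a \<bullet> v - b > 0" using ineqsD(2)[OF ab] vert_in_P[OF v] na by force
  define d where "d = a \<bullet> w v - 1"
  have fx: "a \<bullet> moved s v - (b + s) = (a \<bullet> v - b) + s * d" for s unfolding moved_def d_def by (simp add: inner_add_right algebra_simps)
  have ft: "(a \<bullet> v - b) + t * d < 0" using lt fx[of t] by simp
  have d0: "d < 0"
  proof (rule ccontr)
    assume "\<not> d < 0"
    then have "t * d \<ge> 0" using t by simp
    then show False using ft g by linarith
  qed
  define T where "T = (a \<bullet> v - b) / (- d)"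
  have dpos: "- d > 0" using d0 by simp
  have Tiff: "T < s \<longleftrightarrow> a \<bullet> v - b < s * (- d)" for s unfolding T_def by (rule pos_divide_less_eq[OF dpos])
  have Tt: "T < t" unfolding Tiff using ft by simp
  then have "T < Sup fan_stable" using t by simp
  then obtain t0 where t0: "t0 \<in> fan_stable" "T < t0" using less_cSup_iff[OF fan_stable_nonempty bdd_above_fan_stable] by blast
  have t0p: "t0 > 0" and fan: "normal_fan (shrink t0) = normal_fan P" using t0(1) unfolding fan_stable_eq by auto
  have "(a \<bullet> v - b) + t0 * d < 0"
  proof -
    have "(a \<bullet> v - b) < t0 * (- d)" using t0(2) unfolding Tiff .
    then show ?thesis by simp
  qed
  then have "a \<bullet> moved t0 v < b + t0" using fx[of t0] by simp
  moreover have "moved t0 v \<in> shrink t0" by (rule moved_in_shrink_if_fan_eq[OF t0p fan v])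
  ultimately show False using ab unfolding shrink_def by fastforce
qed

end

section \<open>Lattice points of scaled inner parallel bodies\<close>

lemma codegree_le:
  fixes P :: "(real^'n) set"
  assumes "k \<ge> 1" "int_vec z" "z \<in> interior ((\<lambda>y. real k *\<^sub>R y) ` P)"
  shows "codegree P \<le> k"
  unfolding codegree_def by (rule Least_le) (use assms in blast)

locale gorenstein_directions = vertex_directions P w for P :: "(real^'n) set" and w +
  fixes r :: nat
  assumes index_pos: "r > 0"
    and int_vec_direction: "\<And>v. v \<in> verts \<Longrightarrow> int_vec (real r *\<^sub>R w v)"
begin

lemma scaled_moved_vertices:
  assumes s: "real_of_int s \<ge> real r * nef_value P"
  shows "real_of_int s > 0"
    and "\<And>v. v \<in> verts \<Longrightarrow> moved (real r / real_of_int s) v \<in> shrink (real r / real_of_int s)"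
    and "\<And>v. v \<in> verts \<Longrightarrow> int_vec (real_of_int s *\<^sub>R moved (real r / real_of_int s) v)"
proof -
  have "real r * nef_value P > 0" using index_pos Sup_fan_stable_pos by (simp add: nef_value_eq)
  then show s0: "real_of_int s > 0" using s by simp
  have "real r / Sup fan_stable \<le> real_of_int s" using s by (simp add: nef_value_eq divide_inverse)
  then have "real r / real_of_int s \<le> Sup fan_stable"
    using s0 Sup_fan_stable_pos by (simp add: field_simps)
  moreover have "real r / real_of_int s > 0" using index_pos s0 by simp
  ultimately show "moved (real r / real_of_int s) v \<in> shrink (real r / real_of_int s)" if "v \<in> verts" for v
    using moved_in_shrink_below_Sup that by blast
  show "int_vec (real_of_int s *\<^sub>R moved (real r / real_of_int s) v)" if v: "v \<in> verts" for v
  proof -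
    have "real_of_int s *\<^sub>R moved (real r / real_of_int s) v = real_of_int s *\<^sub>R v + real r *\<^sub>R w v"
      unfolding moved_def using s0 by (simp add: scaleR_add_right)
    then show ?thesis using int_vec_vert[OF v] int_vec_direction[OF v]
      by (simp add: int_vec_add int_vec_scaleR_of_int)
  qed
qed

lemma lattice_polytope_inner_par_scaled:
  assumes s: "real_of_int s \<ge> real r * nef_value P"
  shows "lattice_polytope (inner_par ((\<lambda>x. real_of_int s *\<^sub>R x) ` P) (real r))"
proof -
  define t where "t = real r / real_of_int s"
  note s0 = scaled_moved_vertices(1)[OF s]
  have moved_in: "\<forall>v\<in>verts. moved t v \<in> shrink t"
    using scaled_moved_vertices(2)[OF s] unfolding t_def by blast
  have "inner_par ((\<lambda>x. real_of_int s *\<^sub>R x) ` P) (real r) = (\<lambda>x. real_of_int s *\<^sub>R x) ` shrink t"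
    unfolding t_def by (rule inner_par_scaleR_image[OF s0])
  also have "\<dots> = (\<lambda>x. real_of_int s *\<^sub>R x) ` (convex hull (moved t ` verts))"
    by (simp only: shrink_eq_convex_hull_moved[OF moved_in])
  also have "\<dots> = convex hull ((\<lambda>x. real_of_int s *\<^sub>R x) ` moved t ` verts)"
    by (simp add: convex_hull_scaling)
  also have "\<dots> = convex hull ((\<lambda>v. real_of_int s *\<^sub>R moved t v) ` verts)"
    by (simp add: image_image)
  finally show ?thesis
    unfolding lattice_polytope_def
    using finite_verts verts_nonempty scaled_moved_vertices(3)[OF s, folded t_def]
    by (intro exI[of _ "(\<lambda>v. real_of_int s *\<^sub>R moved t v) ` verts"]) auto
qed

text \<open>With \<open>s = \<lceil>r \<tau>(P)\<rceil>\<close>, any \<open>s\<close>-scaled moved vertex is a lattice point in the interior of \<open>s P\<close>.\<close>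
lemma codegree_less:
  shows "real (codegree P) - 1 < real r * nef_value P"
proof -
  define s where "s = \<lceil>real r * nef_value P\<rceil>"
  have s: "real_of_int s \<ge> real r * nef_value P" unfolding s_def by simp
  note s0 = scaled_moved_vertices(1)[OF s]
  define t where "t = real r / real_of_int s"
  obtain v where v: "v \<in> verts" using verts_nonempty by blast
  have "moved t v \<in> shrink t" unfolding t_def by (rule scaled_moved_vertices(2)[OF s v])
  moreover have "t > 0" unfolding t_def using index_pos s0 by simp
  ultimately have "\<forall>(a,b)\<in>ineqs. b < a \<bullet> moved t v" unfolding shrink_def by fastforce
  then have "real (nat s) *\<^sub>R moved t v \<in> interior ((\<lambda>y. real (nat s) *\<^sub>R y) ` P)"
    using s0 by (intro scaleR_mem_interior_scaleR_image) auto
  moreover have "int_vec (real (nat s) *\<^sub>R moved t v)"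
    using scaled_moved_vertices(3)[OF s v] s0 unfolding t_def by simp
  ultimately have "codegree P \<le> nat s" using s0 by (intro codegree_le) auto
  then show ?thesis using s0 unfolding s_def by linarith
qed

end

theorem proposition1p13:
  fixes P :: "(real^'n) set" and r :: nat
  assumes "lattice_polytope P"
    and "aff_dim P = int CARD('n)"
    and "QGor_fan (normal_fan P) r"
  shows "(\<forall>s::int. real_of_int s \<ge> real r * nef_value P \<longrightarrow>
            lattice_polytope (inner_par ((\<lambda>x. real_of_int s *\<^sub>R x) ` P) (real r)))
         \<and> real (codegree P) - 1 < real r * nef_value P"
proof -
  interpret full_dim_lattice_polytope P using assms(1,2) by unfold_locales
  obtain w where dir: "\<And>v a b. v \<in> verts \<Longrightarrow> (a,b) \<in> ineqs \<Longrightarrow> a \<bullet> v = b \<Longrightarrow> a \<bullet> w v = 1"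
    and int: "\<And>v. v \<in> verts \<Longrightarrow> int_vec (real r *\<^sub>R w v)"
    using QGor_vertex_directions[OF assms(3)] by blast
  interpret gorenstein_directions P w r
    using dir int QGor_fan_index_pos[OF assms(3)] by unfold_locales
  show ?thesis using lattice_polytope_inner_par_scaled codegree_less by blast
qed

end
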